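(* Let $(\mathcal{M},\times,1)$ be a cartesian monoidal category with equivalences. Then there is an isomorphism of categories \[ \mathrm{HtyAlg}(\mathbf{CMon},\mathcal{M})\;\cong\;\mathbf{Special}(\Gamma^{\mathrm{op}},\mathcal{M}). \]
   Context: A monoidal category with equivalences is a monoidal category with a class of morphisms (equivalences) containing all isomorphisms, satisfying two-out-of-three under composition, and closed under $\otimes$; cartesian means the monoidal structure is given by chosen finite products. $\Phi$: objects $n=\{0,\dots,n-1\}$ ($n\ge0$), all functions, symmetric monoidal under disjoint union $+$ with unit $0$. $\mathrm{HtyAlg}(\mathbf{CMon},\mathcal{M})$ (homotopy commutative monoids in $\mathcal{M}$) is the category whose objects are colax symmetric monoidal functors $(X,\xi):(\Phi,+,0)\to(\mathcal{M},\times,1)$ (a functor $X$ with natural maps $\xi_{m,n}:X(m+n)\to X(m)\times X(n)$ and $\xi_0:X(0)\to1$ satisfying coassociativity, counit and symmetry axioms, not necessarily invertible) in which $\xi_0$ and all $\xi_{m,n}$ are equivalences, and whose morphisms are monoidal transformations (natural transformations $\sigma$ compatible with the $\xi$'s: $\xi'_{m,n}\sigma_{m+n}=(\sigma_m\times\sigma_n)\xi_{m,n}$, $\xi'_0\sigma_0=\xi_0$). $\Gamma^{\mathrm{op}}$: objects $[n]=\{0,\dots,n\}$, morphisms basepoint-preserving functions. A special $\Gamma$-object in $\mathcal{M}$ is a functor $Y:\Gamma^{\mathrm{op}}\to\mathcal{M}$ such that for every $n\ge0$ the map $(Y(\rho^n_0),\dots,Y(\rho^n_{n-1})):Y[n]\to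 Y[1]^n$ is an equivalence, where $\rho^n_j:[n]\to[1]$ sends $j+1$ to $1$ and everything else to $0$ (equivalently: for all $m,n$ the map $(Y(\pi^1_{m,n}),Y(\pi^2_{m,n})):Y[m+n]\to Y[m]\times Y[n]$ and $Y[0]\to1$ are equivalences, with $\pi^1_{m,n}$ collapsing $m+1,\dots,m+n$ to $0$ and fixing $0,\dots,m$, and $\pi^2_{m,n}$ collapsing $0,\dots,m$ to $0$ and sending $i>m$ to $i-m$). $\mathbf{Special}(\Gamma^{\mathrm{op}},\mathcal{M})$ is the category of special $\Gamma$-objects and natural transformations. *)

theory Defs
  imports Main "HOL-Library.FuncSet"
begin

text \<open>A category is given by objects, arrows, domain/codomain, identities and composition
  (c_comp g f means g after f).\<close>

record ('o, 'm) ccat =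
  c_ob   :: "'o set"
  c_arr  :: "'m set"
  c_dom  :: "'m \<Rightarrow> 'o"
  c_cod  :: "'m \<Rightarrow> 'o"
  c_id   :: "'o \<Rightarrow> 'm"
  c_comp :: "'m \<Rightarrow> 'm \<Rightarrow> 'm"
  c_prod :: "'o \<Rightarrow> 'o \<Rightarrow> 'o"
  c_one  :: "'o"
  c_pr1  :: "'o \<Rightarrow> 'o \<Rightarrow> 'm"
  c_pr2  :: "'o \<Rightarrow> 'o \<Rightarrow> 'm"
  c_pair :: "'m \<Rightarrow> 'm \<Rightarrow> 'm"
  c_bang :: "'o \<Rightarrow> 'm"

definition c_hom :: "('o, 'm) ccat \<Rightarrow> 'o \<Rightarrow> 'o \<Rightarrow> 'm set" where
  "c_hom C a b = {f \<in> c_arr C. c_dom C f = a \<and> c_cod C f = b}"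

definition is_category :: "('o, 'm) ccat \<Rightarrow> bool" where
  "is_category C \<longleftrightarrow>
     (\<forall>f \<in> c_arr C. c_dom C f \<in> c_ob C \<and> c_cod C f \<in> c_ob C) \<and>
     (\<forall>a \<in> c_ob C. c_id C a \<in> c_hom C a a) \<and>
     (\<forall>a b c f g. f \<in> c_hom C a b \<longrightarrow> g \<in> c_hom C b c \<longrightarrow> c_comp C g f \<in> c_hom C a c) \<and>
     (\<forall>a b f. f \<in> c_hom C a b \<longrightarrow> c_comp C f (c_id C a) = f \<and> c_comp C (c_id C b) f = f) \<and>
     (\<forall>a b c d f g h. f \<in> c_hom C a b \<longrightarrow> g \<in> c_hom C b c \<longrightarrow> h \<in> c_hom C c d \<longrightarrow>
        c_comp C h (c_comp C g f) = c_comp C (c_comp C h g) f)"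

definition has_chosen_finite_products :: "('o, 'm) ccat \<Rightarrow> bool" where
  "has_chosen_finite_products C \<longleftrightarrow>
     c_one C \<in> c_ob C \<and>
     (\<forall>a \<in> c_ob C. c_bang C a \<in> c_hom C a (c_one C)) \<and>
     (\<forall>a f. f \<in> c_hom C a (c_one C) \<longrightarrow> f = c_bang C a) \<and>
     (\<forall>a \<in> c_ob C. \<forall>b \<in> c_ob C.
        c_prod C a b \<in> c_ob C \<and>
        c_pr1 C a b \<in> c_hom C (c_prod C a b) a \<and>
        c_pr2 C a b \<in> c_hom C (c_prod C a b) b) \<and>
     (\<forall>a b c f g. f \<in> c_hom C c a \<longrightarrow> g \<in> c_hom C c b \<longrightarrow>
        c_pair C f g \<in> c_hom C c (c_prod C a b) \<and>
        c_comp C (c_pr1 C a b) (c_pair C f g) = f \<and>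
        c_comp C (c_pr2 C a b) (c_pair C f g) = g) \<and>
     (\<forall>a b c h. a \<in> c_ob C \<longrightarrow> b \<in> c_ob C \<longrightarrow> h \<in> c_hom C c (c_prod C a b) \<longrightarrow>
        h = c_pair C (c_comp C (c_pr1 C a b) h) (c_comp C (c_pr2 C a b) h))"

definition c_tensor :: "('o, 'm) ccat \<Rightarrow> 'm \<Rightarrow> 'm \<Rightarrow> 'm" where
  "c_tensor C f g =
     c_pair C (c_comp C f (c_pr1 C (c_dom C f) (c_dom C g)))
              (c_comp C g (c_pr2 C (c_dom C f) (c_dom C g)))"

definition c_iso :: "('o, 'm) ccat \<Rightarrow> 'm \<Rightarrow> bool" where
  "c_iso C f \<longleftrightarrow> f \<in> c_arr C \<and>
     (\<exists>g \<in> c_hom C (c_cod C f) (c_dom C f).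
        c_comp C g f = c_id C (c_dom C f) \<and> c_comp C f g = c_id C (c_cod C f))"

definition cartesian_cat_with_equivalences :: "('o, 'm) ccat \<Rightarrow> 'm set \<Rightarrow> bool" where
  "cartesian_cat_with_equivalences C W \<longleftrightarrow>
     is_category C \<and> has_chosen_finite_products C \<and>
     W \<subseteq> c_arr C \<and>
     (\<forall>f. c_iso C f \<longrightarrow> f \<in> W) \<and>
     (\<forall>f g. f \<in> c_arr C \<longrightarrow> g \<in> c_arr C \<longrightarrow> c_cod C f = c_dom C g \<longrightarrow>
        ((f \<in> W \<and> g \<in> W \<longrightarrow> c_comp C g f \<in> W) \<and>
         (f \<in> W \<and> c_comp C g f \<in> W \<longrightarrow> g \<in> W) \<and>
         (g \<in> W \<and> c_comp C g f \<in> W \<longrightarrow> f \<in> W))) \<and>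
     (\<forall>f g. f \<in> W \<longrightarrow> g \<in> W \<longrightarrow> c_tensor C f g \<in> W)"

definition c_assoc :: "('o, 'm) ccat \<Rightarrow> 'o \<Rightarrow> 'o \<Rightarrow> 'o \<Rightarrow> 'm" where
  \<comment> \<open>a \<times> (b \<times> c) \<rightarrow> (a \<times> b) \<times> c\<close>
  "c_assoc C a b c =
     c_pair C (c_pair C (c_pr1 C a (c_prod C b c))
                        (c_comp C (c_pr1 C b c) (c_pr2 C a (c_prod C b c))))
              (c_comp C (c_pr2 C b c) (c_pr2 C a (c_prod C b c)))"

definition c_swap :: "('o, 'm) ccat \<Rightarrow> 'o \<Rightarrow> 'o \<Rightarrow> 'm" where
  "c_swap C a b = c_pair C (c_pr2 C a b) (c_pr1 C a b)"

section \<open>The category Phi: objects n = {0..n-1}, all functions\<close>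

definition phi_hom :: "nat \<Rightarrow> nat \<Rightarrow> (nat \<Rightarrow> nat) set" where
  "phi_hom m n = {..<m} \<rightarrow> {..<n}"

text \<open>Disjoint union of maps f : m \<rightarrow> m', g : n \<rightarrow> n', as a map m+n \<rightarrow> m'+n'.\<close>
definition phi_plus :: "nat \<Rightarrow> nat \<Rightarrow> (nat \<Rightarrow> nat) \<Rightarrow> (nat \<Rightarrow> nat) \<Rightarrow> nat \<Rightarrow> nat" where
  "phi_plus m m' f g = (\<lambda>i. if i < m then f i else m' + g (i - m))"

definition phi_twist :: "nat \<Rightarrow> nat \<Rightarrow> nat \<Rightarrow> nat" where
  "phi_twist m n = (\<lambda>i. if i < m then n + i else i - m)"

text \<open>Arrows of Phi are functions on {0..<m}; XM m n f depends only on the restriction of f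
  to {0..<m}, and is normalised to undefined on non-arrows (so that the functor is
  determined by its genuine data).\<close>

definition phi_functor :: "('o, 'm) ccat \<Rightarrow> (nat \<Rightarrow> 'o) \<Rightarrow> (nat \<Rightarrow> nat \<Rightarrow> (nat \<Rightarrow> nat) \<Rightarrow> 'm) \<Rightarrow> bool" where
  "phi_functor C XO XM \<longleftrightarrow>
     (\<forall>n. XO n \<in> c_ob C) \<and>
     (\<forall>m n f. f \<in> phi_hom m n \<longrightarrow> XM m n f \<in> c_hom C (XO m) (XO n)) \<and>
     (\<forall>m n f g. (\<forall>i<m. f i = g i) \<longrightarrow> XM m n f = XM m n g) \<and>
     (\<forall>m n f. f \<notin> phi_hom m n \<longrightarrow> XM m n f = undefined) \<and>
     (\<forall>n. XM n n id = c_id C (XO n)) \<and>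
     (\<forall>m n k f g. f \<in> phi_hom m n \<longrightarrow> g \<in> phi_hom n k \<longrightarrow>
        XM m k (g \<circ> f) = c_comp C (XM n k g) (XM m n f))"

text \<open>Objects of HtyAlg(CMon, C): colax symmetric monoidal functors (X, xi) from (Phi,+,0) to
  (C,\<times>,1) whose structure maps are equivalences. An object is a tuple (XO, XM, xi, xi0).\<close>

type_synonym ('o, 'm) hty_obj =
  "(nat \<Rightarrow> 'o) \<times> (nat \<Rightarrow> nat \<Rightarrow> (nat \<Rightarrow> nat) \<Rightarrow> 'm) \<times> (nat \<Rightarrow> nat \<Rightarrow> 'm) \<times> 'm"

definition hty_obj :: "('o, 'm) ccat \<Rightarrow> 'm set \<Rightarrow> ('o, 'm) hty_obj \<Rightarrow> bool" where
  "hty_obj C W X \<longleftrightarrow> (case X of (XO, XM, xi, xi0) \<Rightarrow>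
     phi_functor C XO XM \<and>
     \<comment> \<open>structure maps\<close>
     (\<forall>m n. xi m n \<in> c_hom C (XO (m + n)) (c_prod C (XO m) (XO n))) \<and>
     xi0 \<in> c_hom C (XO 0) (c_one C) \<and>
     \<comment> \<open>naturality of xi\<close>
     (\<forall>m m' n n' f g. f \<in> phi_hom m m' \<longrightarrow> g \<in> phi_hom n n' \<longrightarrow>
        c_comp C (xi m' n') (XM (m + n) (m' + n') (phi_plus m m' f g)) =
        c_comp C (c_tensor C (XM m m' f) (XM n n' g)) (xi m n)) \<and>
     \<comment> \<open>coassociativity\<close>
     (\<forall>l m n.
        c_comp C (c_tensor C (xi l m) (c_id C (XO n))) (xi (l + m) n) =
        c_comp C (c_assoc C (XO l) (XO m) (XO n))
          (c_comp C (c_tensor C (c_id C (XO l)) (xi m n)) (xi l (m + n)))) \<and>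
     \<comment> \<open>counit axioms\<close>
     (\<forall>n. c_comp C (c_tensor C xi0 (c_id C (XO n))) (xi 0 n) =
          c_pair C (c_bang C (XO n)) (c_id C (XO n))) \<and>
     (\<forall>n. c_comp C (c_tensor C (c_id C (XO n)) xi0) (xi n 0) =
          c_pair C (c_id C (XO n)) (c_bang C (XO n))) \<and>
     \<comment> \<open>symmetry\<close>
     (\<forall>m n. c_comp C (c_swap C (XO m) (XO n)) (xi m n) =
          c_comp C (xi n m) (XM (m + n) (n + m) (phi_twist m n))) \<and>
     \<comment> \<open>homotopy condition: structure maps are equivalences\<close>
     xi0 \<in> W \<and> (\<forall>m n. xi m n \<in> W))"

definition hty_mor :: "('o, 'm) ccat \<Rightarrow> 'm set \<Rightarrow> ('o, 'm) hty_obj \<Rightarrow> ('o, 'm) hty_obj \<Rightarrow> (nat \<Rightarrow> 'm) \<Rightarrow> bool" where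
  "hty_mor C W X X' \<sigma> \<longleftrightarrow> hty_obj C W X \<and> hty_obj C W X' \<and>
     (case X of (XO, XM, xi, xi0) \<Rightarrow> case X' of (XO', XM', xi', xi0') \<Rightarrow>
       (\<forall>n. \<sigma> n \<in> c_hom C (XO n) (XO' n)) \<and>
       (\<forall>m n f. f \<in> phi_hom m n \<longrightarrow> c_comp C (XM' m n f) (\<sigma> m) = c_comp C (\<sigma> n) (XM m n f)) \<and>
       (\<forall>m n. c_comp C (xi' m n) (\<sigma> (m + n)) = c_comp C (c_tensor C (\<sigma> m) (\<sigma> n)) (xi m n)) \<and>
       c_comp C xi0' (\<sigma> 0) = xi0)"

definition hty_id :: "('o, 'm) ccat \<Rightarrow> ('o, 'm) hty_obj \<Rightarrow> nat \<Rightarrow> 'm" where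
  "hty_id C X = (\<lambda>n. c_id C (fst X n))"

section \<open>Gamma^op: objects [n] = {0..n}, basepoint-preserving maps\<close>

definition gam_hom :: "nat \<Rightarrow> nat \<Rightarrow> (nat \<Rightarrow> nat) set" where
  "gam_hom m n = {f \<in> {..m} \<rightarrow> {..n}. f 0 = 0}"

definition gam_functor :: "('o, 'm) ccat \<Rightarrow> (nat \<Rightarrow> 'o) \<Rightarrow> (nat \<Rightarrow> nat \<Rightarrow> (nat \<Rightarrow> nat) \<Rightarrow> 'm) \<Rightarrow> bool" where
  "gam_functor C YO YM \<longleftrightarrow>
     (\<forall>n. YO n \<in> c_ob C) \<and>
     (\<forall>m n f. f \<in> gam_hom m n \<longrightarrow> YM m n f \<in> c_hom C (YO m) (YO n)) \<and>
     (\<forall>m n f g. (\<forall>i\<le>m. f i = g i) \<longrightarrow> YM m n f = YM m n g) \<and>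
     (\<forall>m n f. f \<notin> gam_hom m n \<longrightarrow> YM m n f = undefined) \<and>
     (\<forall>n. YM n n id = c_id C (YO n)) \<and>
     (\<forall>m n k f g. f \<in> gam_hom m n \<longrightarrow> g \<in> gam_hom n k \<longrightarrow>
        YM m k (g \<circ> f) = c_comp C (YM n k g) (YM m n f))"

definition gam_rho :: "nat \<Rightarrow> nat \<Rightarrow> nat \<Rightarrow> nat" where
  "gam_rho n j = (\<lambda>i. if i = j + 1 then 1 else 0)"

fun c_pow :: "('o, 'm) ccat \<Rightarrow> 'o \<Rightarrow> nat \<Rightarrow> 'o" where
  "c_pow C a 0 = c_one C"
| "c_pow C a (Suc k) = c_prod C a (c_pow C a k)"

fun c_tuple :: "('o, 'm) ccat \<Rightarrow> 'o \<Rightarrow> (nat \<Rightarrow> 'm) \<Rightarrow> nat \<Rightarrow> 'm" where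
  "c_tuple C a fs 0 = c_bang C a"
| "c_tuple C a fs (Suc k) = c_pair C (fs 0) (c_tuple C a (\<lambda>j. fs (Suc j)) k)"

type_synonym ('o, 'm) gam_obj = "(nat \<Rightarrow> 'o) \<times> (nat \<Rightarrow> nat \<Rightarrow> (nat \<Rightarrow> nat) \<Rightarrow> 'm)"

text \<open>Special Gamma-objects: (Y rho^n_0, ..., Y rho^n_{n-1}) : Y[n] \<rightarrow> Y[1]^n is an equivalence.\<close>
definition special_obj :: "('o, 'm) ccat \<Rightarrow> 'm set \<Rightarrow> ('o, 'm) gam_obj \<Rightarrow> bool" where
  "special_obj C W Y \<longleftrightarrow> (case Y of (YO, YM) \<Rightarrow>
     gam_functor C YO YM \<and>
     (\<forall>n. c_tuple C (YO n) (\<lambda>j. YM n 1 (gam_rho n j)) n \<in> W))"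

definition special_mor :: "('o, 'm) ccat \<Rightarrow> 'm set \<Rightarrow> ('o, 'm) gam_obj \<Rightarrow> ('o, 'm) gam_obj \<Rightarrow> (nat \<Rightarrow> 'm) \<Rightarrow> bool" where
  "special_mor C W Y Y' \<tau> \<longleftrightarrow> special_obj C W Y \<and> special_obj C W Y' \<and>
     (case Y of (YO, YM) \<Rightarrow> case Y' of (YO', YM') \<Rightarrow>
       (\<forall>n. \<tau> n \<in> c_hom C (YO n) (YO' n)) \<and>
       (\<forall>m n f. f \<in> gam_hom m n \<longrightarrow> c_comp C (YM' m n f) (\<tau> m) = c_comp C (\<tau> n) (YM m n f)))"

definition special_id :: "('o, 'm) ccat \<Rightarrow> ('o, 'm) gam_obj \<Rightarrow> nat \<Rightarrow> 'm" where
  "special_id C Y = (\<lambda>n. c_id C (fst Y n))"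

definition nt_comp :: "('o, 'm) ccat \<Rightarrow> (nat \<Rightarrow> 'm) \<Rightarrow> (nat \<Rightarrow> 'm) \<Rightarrow> nat \<Rightarrow> 'm" where
  "nt_comp C \<tau> \<sigma> = (\<lambda>n. c_comp C (\<tau> n) (\<sigma> n))"

definition hty_iso_special :: "('o, 'm) ccat \<Rightarrow> 'm set \<Rightarrow> bool" where
  "hty_iso_special C W \<longleftrightarrow>
   (\<exists>(Fo :: ('o, 'm) hty_obj \<Rightarrow> ('o, 'm) gam_obj)
      (Fm :: ('o, 'm) hty_obj \<Rightarrow> ('o, 'm) hty_obj \<Rightarrow> (nat \<Rightarrow> 'm) \<Rightarrow> nat \<Rightarrow> 'm)
      (Go :: ('o, 'm) gam_obj \<Rightarrow> ('o, 'm) hty_obj)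
      (Gm :: ('o, 'm) gam_obj \<Rightarrow> ('o, 'm) gam_obj \<Rightarrow> (nat \<Rightarrow> 'm) \<Rightarrow> nat \<Rightarrow> 'm).
     \<comment> \<open>F is a functor HtyAlg \<rightarrow> Special\<close>
     (\<forall>X. hty_obj C W X \<longrightarrow> special_obj C W (Fo X)) \<and>
     (\<forall>X X' \<sigma>. hty_mor C W X X' \<sigma> \<longrightarrow> special_mor C W (Fo X) (Fo X') (Fm X X' \<sigma>)) \<and>
     (\<forall>X. hty_obj C W X \<longrightarrow> Fm X X (hty_id C X) = special_id C (Fo X)) \<and>
     (\<forall>X X' X'' \<sigma> \<tau>. hty_mor C W X X' \<sigma> \<longrightarrow> hty_mor C W X' X'' \<tau> \<longrightarrow>
        Fm X X'' (nt_comp C \<tau> \<sigma>) = nt_comp C (Fm X' X'' \<tau>) (Fm X X' \<sigma>)) \<and>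
     \<comment> \<open>G is a functor Special \<rightarrow> HtyAlg\<close>
     (\<forall>Y. special_obj C W Y \<longrightarrow> hty_obj C W (Go Y)) \<and>
     (\<forall>Y Y' \<tau>. special_mor C W Y Y' \<tau> \<longrightarrow> hty_mor C W (Go Y) (Go Y') (Gm Y Y' \<tau>)) \<and>
     (\<forall>Y. special_obj C W Y \<longrightarrow> Gm Y Y (special_id C Y) = hty_id C (Go Y)) \<and>
     (\<forall>Y Y' Y'' \<sigma> \<tau>. special_mor C W Y Y' \<sigma> \<longrightarrow> special_mor C W Y' Y'' \<tau> \<longrightarrow>
        Gm Y Y'' (nt_comp C \<tau> \<sigma>) = nt_comp C (Gm Y' Y'' \<tau>) (Gm Y Y' \<sigma>)) \<and>
     \<comment> \<open>G \<circ> F = Id and F \<circ> G = Id\<close>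
     (\<forall>X. hty_obj C W X \<longrightarrow> Go (Fo X) = X) \<and>
     (\<forall>X X' \<sigma>. hty_mor C W X X' \<sigma> \<longrightarrow> Gm (Fo X) (Fo X') (Fm X X' \<sigma>) = \<sigma>) \<and>
     (\<forall>Y. special_obj C W Y \<longrightarrow> Fo (Go Y) = Y) \<and>
     (\<forall>Y Y' \<tau>. special_mor C W Y Y' \<tau> \<longrightarrow> Fm (Go Y) (Go Y') (Gm Y Y' \<tau>) = \<tau>))"

end

theory Submission
  imports Defs
begin

text \<open>
  Given \<open>X\<close>, factor a basepoint-preserving \<open>g : [m] \<rightarrow> [n]\<close> as \<open>h\<^sub>+ \<circ> \<pi>\<^sup>1\<^sub>k\<^sub>,\<^sub>m\<^sub>-\<^sub>k \<circ> p\<^sub>+\<close>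
  with \<open>p\<close> a permutation and put \<open>Y g = X h \<circ> pr\<^sub>1 \<xi>\<^sub>k\<^sub>,\<^sub>m\<^sub>-\<^sub>k \<circ> X p\<close>; naturality and
  coassociativity of \<open>\<xi>\<close> make this independent of the factorisation and functorial.  Given
  \<open>Y\<close>, restrict it along \<open>f \<mapsto> f\<^sub>+\<close> to \<open>\<Phi>\<close> and put \<open>\<xi>\<^sub>m\<^sub>,\<^sub>n = (Y \<pi>\<^sup>1\<^sub>m\<^sub>,\<^sub>n, Y \<pi>\<^sup>2\<^sub>m\<^sub>,\<^sub>n)\<close>.  The
  counit axiom makes the first construction restrict to \<open>X\<close> on \<open>\<Phi>\<close>, and symmetry identifies
  \<open>Y \<pi>\<^sup>2\<close> with the second component of \<open>\<xi>\<close>; so the two constructions are mutually inverse, and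
  both act as the identity on the components of natural transformations.  Finally, the Segal map
  of \<open>[n + 1]\<close> is \<open>(id \<times> Segal map of [n]) \<circ> \<xi>\<^sub>1\<^sub>,\<^sub>n\<close>, so by two-out-of-three and
  coassociativity speciality of \<open>Y\<close> is equivalent to all \<open>\<xi>\<close> being equivalences.
\<close>

lemma phi_plus_hom:
  "f \<in> phi_hom m m' \<Longrightarrow> g \<in> phi_hom n n' \<Longrightarrow> phi_plus m m' f g \<in> phi_hom (m + n) (m' + n')"
  unfolding phi_hom_def phi_plus_def by (auto simp: Pi_iff intro: trans_less_add1)

lemma phi_twist_hom: "phi_twist m n \<in> phi_hom (m + n) (n + m)"
  unfolding phi_hom_def phi_twist_def by auto

lemma bij_betw_imp_phi_hom: "bij_betw p {..<m} {..<m} \<Longrightarrow> p \<in> phi_hom m m"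
  unfolding phi_hom_def bij_betw_def by auto

lemma bij_betw_phi_twist: "bij_betw (phi_twist m n) {..<m + n} {..<m + n}"
proof -
  have "inj_on (phi_twist m n) {..<m + n}"
    unfolding inj_on_def phi_twist_def by auto
  moreover have "j \<in> phi_twist m n ` {..<m + n}" if "j < m + n" for j
  proof (cases "j < n")
    case True
    then have "phi_twist m n (j + m) = j" "j + m < m + n"
      unfolding phi_twist_def by auto
    then show ?thesis by (metis image_eqI lessThan_iff)
  next
    case False
    then have "phi_twist m n (j - n) = j" "j - n < m + n"
      using that unfolding phi_twist_def by auto
    then show ?thesis by (metis image_eqI lessThan_iff)
  qed
  ultimately show ?thesis
    by (auto simp: bij_betw_def phi_twist_def)
qed

lemma ex_bij_betw_front:
  "\<exists>q. bij_betw q {..<a} {..<a} \<and> (\<forall>i<a. q i < card {i. i < a \<and> P i} \<longleftrightarrow> P i)"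
proof -
  define D where "D = {i. i < a \<and> P i}"
  define E where "E = {i. i < a \<and> \<not> P i}"
  define k where "k = card D"
  have fin: "finite D" "finite E" by (auto simp: D_def E_def)
  have DE: "D \<union> E = {..<a}" "D \<inter> E = {}" by (auto simp: D_def E_def)
  then have card_DE: "k + card E = a"
    using card_Un_disjoint[OF fin] by (simp add: k_def)
  obtain u where u: "bij_betw u D {0..<k}"
    using ex_bij_betw_finite_nat[OF fin(1)] k_def by auto
  obtain v where v: "bij_betw v E {0..<card E}"
    using ex_bij_betw_finite_nat[OF fin(2)] by auto
  define q where "q i = (if P i then u i else k + v i)" for i
  have "bij_betw q D {0..<k}"
    using u by (rule bij_betw_cong[THEN iffD1, rotated]) (auto simp: q_def D_def)
  moreover have "bij_betw q E {k..<a}"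
  proof -
    have "bij_betw ((+) k) {0..<card E} {k..<a}"
      using card_DE by (simp add: bij_betw_def inj_on_def)
        (auto simp: image_def intro!: exI[where x="_ - k"])
    from bij_betw_trans[OF v this] show ?thesis
      by (rule bij_betw_cong[THEN iffD1, rotated]) (auto simp: q_def E_def)
  qed
  ultimately have "bij_betw q (D \<union> E) ({0..<k} \<union> {k..<a})"
    by (rule bij_betw_combine) auto
  moreover have "{0..<k} \<union> {k..<a} = {..<a}"
    using card_DE by auto
  ultimately have "bij_betw q {..<a} {..<a}"
    using DE by simp
  moreover have "q i < k \<longleftrightarrow> P i" if "i < a" for i
    using u that bij_betw_apply[OF u, of i] by (auto simp: q_def D_def)
  ultimately show ?thesis
    by (auto simp: k_def D_def)
qed

text \<open>\<open>phi_to_gam f\<close> is \<open>f\<^sub>+\<close>, the image of \<open>f\<close> under the functor \<open>\<Phi> \<rightarrow> \<Gamma>\<^sup>o\<^sup>p\<close> adding a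
  basepoint; \<open>gam_pr1 m n\<close> and \<open>gam_pr2 m n\<close> are \<open>\<pi>\<^sup>1\<^sub>m\<^sub>,\<^sub>n\<close> and \<open>\<pi>\<^sup>2\<^sub>m\<^sub>,\<^sub>n\<close>.\<close>

definition phi_to_gam :: "(nat \<Rightarrow> nat) \<Rightarrow> nat \<Rightarrow> nat" where
  "phi_to_gam f = (\<lambda>i. if i = 0 then 0 else Suc (f (i - 1)))"

definition gam_pr1 :: "nat \<Rightarrow> nat \<Rightarrow> nat \<Rightarrow> nat" where
  "gam_pr1 m n = (\<lambda>i. if i \<le> m then i else 0)"

definition gam_pr2 :: "nat \<Rightarrow> nat \<Rightarrow> nat \<Rightarrow> nat" where
  "gam_pr2 m n = (\<lambda>i. if i \<le> m then 0 else i - m)"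

lemma phi_to_gam_hom: "f \<in> phi_hom m n \<Longrightarrow> phi_to_gam f \<in> gam_hom m n"
  unfolding phi_to_gam_def gam_hom_def phi_hom_def by (auto simp: Pi_iff Suc_le_eq)

lemma phi_to_gam_id: "phi_to_gam id = id"
  by (auto simp: phi_to_gam_def fun_eq_iff)

lemma phi_to_gam_comp: "phi_to_gam (g \<circ> f) = phi_to_gam g \<circ> phi_to_gam f"
  by (auto simp: phi_to_gam_def fun_eq_iff)

lemma gam_comp_hom: "f \<in> gam_hom m n \<Longrightarrow> g \<in> gam_hom n k \<Longrightarrow> g \<circ> f \<in> gam_hom m k"
  unfolding gam_hom_def by auto

lemma gam_pr1_hom: "gam_pr1 m n \<in> gam_hom (m + n) m"
  unfolding gam_pr1_def gam_hom_def by auto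

lemma gam_pr2_hom: "gam_pr2 m n \<in> gam_hom (m + n) n"
  unfolding gam_pr2_def gam_hom_def by auto

lemma gam_rho_hom: "gam_rho n j \<in> gam_hom n 1"
  by (auto simp: gam_rho_def gam_hom_def)

lemma gam_rho_0: "gam_rho n 0 = gam_pr1 1 k"
  by (auto simp: gam_rho_def gam_pr1_def fun_eq_iff)

lemma gam_rho_Suc: "gam_rho (Suc n) (Suc j) = gam_rho n j \<circ> gam_pr2 1 n"
  by (auto simp: gam_rho_def gam_pr2_def fun_eq_iff)

lemma bij_betw_phi_plus_id:
  assumes q: "bij_betw q {..<k} {..<k}" and "k \<le> m"
  shows "bij_betw (phi_plus k k q id) {..<m} {..<m}"
proof -
  have "bij_betw (phi_plus k k q id) {..<k} {..<k}"
    using q by (rule bij_betw_cong[THEN iffD1, rotated]) (simp add: phi_plus_def)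
  moreover have "bij_betw (phi_plus k k q id) {k..<m} {k..<m}"
    by (rule bij_betw_cong[THEN iffD1, rotated, of id]) (auto simp: phi_plus_def)
  ultimately have "bij_betw (phi_plus k k q id) ({..<k} \<union> {k..<m}) ({..<k} \<union> {k..<m})"
    by (rule bij_betw_combine) auto
  moreover have "{..<k} \<union> {k..<m} = {..<m}"
    using \<open>k \<le> m\<close> by auto
  ultimately show ?thesis by simp
qed

lemma bij_betw_lessThan_inverse:
  assumes "bij_betw p {..<m} {..<m}"
  obtains p' where "\<And>j. j < m \<Longrightarrow> p' j < m" "\<And>j. j < m \<Longrightarrow> p (p' j) = j"
    "\<And>i. i < m \<Longrightarrow> p' (p i) = i"
proof
  show "inv_into {..<m} p j < m" if "j < m" for j
    using bij_betw_apply[OF bij_betw_inv_into[OF assms]] that by simp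
  show "p (inv_into {..<m} p j) = j" if "j < m" for j
    using bij_betw_inv_into_right[OF assms] that by simp
  show "inv_into {..<m} p (p i) = i" if "i < m" for i
    using bij_betw_inv_into_left[OF assms] that by simp
qed

lemma ex_phi_plus_factor:
  assumes f: "f \<in> phi_hom a n" and "b \<le> n"
  obtains j q f1 f2 where "j \<le> a" "bij_betw q {..<a} {..<a}" "f1 \<in> phi_hom j b"
    "f2 \<in> phi_hom (a - j) (n - b)" "\<And>i. i < a \<Longrightarrow> f i = phi_plus j b f1 f2 (q i)"
proof -
  define j where "j = card {i. i < a \<and> f i < b}"
  obtain q where q: "bij_betw q {..<a} {..<a}" and front: "\<And>i. i < a \<Longrightarrow> q i < j \<longleftrightarrow> f i < b"
    using ex_bij_betw_front[of a "\<lambda>i. f i < b"] unfolding j_def by blast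
  obtain q' where q'_lt: "\<And>x. x < a \<Longrightarrow> q' x < a" and q_q': "\<And>x. x < a \<Longrightarrow> q (q' x) = x"
    and q'_q: "\<And>i. i < a \<Longrightarrow> q' (q i) = i"
    using bij_betw_lessThan_inverse[OF q] by blast
  have "j \<le> a"
    unfolding j_def by (rule order_trans[OF card_mono[of "{..<a}"]]) auto
  define f1 where "f1 x = f (q' x)" for x
  define f2 where "f2 x = f (q' (x + j)) - b" for x
  have f1_lt: "f1 x < b \<longleftrightarrow> x < j" if "x < a" for x
    unfolding f1_def using front[of "q' x"] q'_lt q_q' that by simp
  have f1_lt_n: "f1 x < n" if "x < a" for x
    unfolding f1_def using f q'_lt that by (auto simp: phi_hom_def)
  have "f1 \<in> phi_hom j b"
    unfolding phi_hom_def using f1_lt \<open>j \<le> a\<close> by auto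
  moreover have "f2 \<in> phi_hom (a - j) (n - b)"
  proof -
    have "b \<le> f1 (x + j)" "f1 (x + j) < n" if "x < a - j" for x
      using f1_lt[of "x + j"] f1_lt_n[of "x + j"] that by (auto simp: less_diff_conv)
    then show ?thesis
      unfolding phi_hom_def f2_def[folded f1_def] by (auto simp: diff_less_mono)
  qed
  moreover have "f i = phi_plus j b f1 f2 (q i)" if "i < a" for i
    using f1_lt[of "q i"] that q'_q bij_betw_apply[OF q]
    by (auto simp: phi_plus_def f1_def f2_def)
  ultimately show ?thesis
    using that \<open>j \<le> a\<close> q by blast
qed

section \<open>Factorisation of \<open>\<Gamma>\<^sup>o\<^sup>p\<close>-maps through \<open>\<Phi>\<close>\<close>

text \<open>Pointwise form of \<open>g = h\<^sub>+ \<circ> \<pi>\<^sup>1\<^sub>k\<^sub>,\<^sub>m\<^sub>-\<^sub>k \<circ> p\<^sub>+\<close> with \<open>p\<close> a permutation; the point \<open>i\<close>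
  of \<open>m\<close> is the point \<open>i + 1\<close> of \<open>[m]\<close>.\<close>

definition gam_factor ::
    "nat \<Rightarrow> nat \<Rightarrow> (nat \<Rightarrow> nat) \<Rightarrow> nat \<Rightarrow> (nat \<Rightarrow> nat) \<Rightarrow> (nat \<Rightarrow> nat) \<Rightarrow> bool" where
  "gam_factor m n g k p h \<longleftrightarrow> k \<le> m \<and> bij_betw p {..<m} {..<m} \<and> h \<in> phi_hom k n \<and>
     (\<forall>i<m. g (Suc i) \<noteq> 0 \<longleftrightarrow> p i < k) \<and> (\<forall>i<m. p i < k \<longrightarrow> h (p i) = g (Suc i) - 1)"

lemma gam_factor_factors:
  assumes "gam_factor m n g k p h" "g \<in> gam_hom m n" "i \<le> m"
  shows "(phi_to_gam h \<circ> gam_pr1 k (m - k) \<circ> phi_to_gam p) i = g i"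
proof (cases i)
  case 0
  then show ?thesis
    using assms(2) by (simp add: phi_to_gam_def gam_pr1_def gam_hom_def)
next
  case (Suc j)
  then have "j < m"
    using assms(3) by simp
  then show ?thesis
    using assms(1) Suc unfolding gam_factor_def
    by (cases "p j < k") (auto simp: phi_to_gam_def gam_pr1_def)
qed

lemma gam_factor_card:
  assumes "gam_factor m n g k p h"
  shows "k = card {i. i < m \<and> g (Suc i) \<noteq> 0}"
proof -
  let ?D = "{i. i < m \<and> g (Suc i) \<noteq> 0}"
  have p: "bij_betw p {..<m} {..<m}" and "k \<le> m"
    using assms by (auto simp: gam_factor_def)
  have "inj_on p ?D"
    using p by (auto simp: bij_betw_def inj_on_def)
  moreover have "p ` ?D = {..<k}"
  proof
    show "p ` ?D \<subseteq> {..<k}"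
      using assms by (auto simp: gam_factor_def)
    show "{..<k} \<subseteq> p ` ?D"
    proof
      fix j assume "j \<in> {..<k}"
      then have "j \<in> p ` {..<m}"
        using p \<open>k \<le> m\<close> by (auto simp: bij_betw_def)
      then show "j \<in> p ` ?D"
        using assms \<open>j \<in> {..<k}\<close> by (auto simp: gam_factor_def)
    qed
  qed
  ultimately show ?thesis
    by (metis card_image card_lessThan)
qed

lemma gam_factor_exists:
  assumes g: "g \<in> gam_hom m n"
  obtains k p h where "gam_factor m n g k p h"
proof -
  define k where "k = card {i. i < m \<and> g (Suc i) \<noteq> 0}"
  obtain p where p: "bij_betw p {..<m} {..<m}" and front: "\<And>i. i < m \<Longrightarrow> p i < k \<longleftrightarrow> g (Suc i) \<noteq> 0"
    using ex_bij_betw_front[of m "\<lambda>i. g (Suc i) \<noteq> 0"] unfolding k_def by blast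
  obtain p' where p'_lt: "\<And>j. j < m \<Longrightarrow> p' j < m" and p_p': "\<And>j. j < m \<Longrightarrow> p (p' j) = j"
    and p'_p: "\<And>i. i < m \<Longrightarrow> p' (p i) = i"
    using bij_betw_lessThan_inverse[OF p] by blast
  have "k \<le> m"
    unfolding k_def by (rule order_trans[OF card_mono[of "{..<m}"]]) auto
  define h where "h j = g (Suc (p' j)) - 1" for j
  have "h \<in> phi_hom k n"
    unfolding phi_hom_def
  proof
    fix j assume "j \<in> {..<k}"
    then have "j < m" "j < k"
      using \<open>k \<le> m\<close> by auto
    moreover have "Suc (p' j) \<le> m"
      using p'_lt[of j] \<open>j < m\<close> by simp
    ultimately have "g (Suc (p' j)) \<noteq> 0" "g (Suc (p' j)) \<le> n"
      using front[of "p' j"] p'_lt p_p' g by (auto simp: gam_hom_def Pi_iff)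
    then show "h j \<in> {..<n}"
      by (simp add: h_def)
  qed
  then have "gam_factor m n g k p h"
    unfolding gam_factor_def using \<open>k \<le> m\<close> p front p'_p by (auto simp: h_def)
  then show ?thesis ..
qed

lemma gam_factor_unique:
  assumes v1: "gam_factor m n g k p1 h1" and v2: "gam_factor m n g k p2 h2"
  obtains r r2 where "r \<in> phi_hom k k" "r2 \<in> phi_hom (m - k) (m - k)"
    "\<And>i. i < m \<Longrightarrow> p2 i = phi_plus k k r r2 (p1 i)" "\<And>j. j < k \<Longrightarrow> h1 j = h2 (r j)"
proof -
  have "k \<le> m" and p1: "bij_betw p1 {..<m} {..<m}" and p2: "bij_betw p2 {..<m} {..<m}"
    and front1: "\<And>i. i < m \<Longrightarrow> g (Suc i) \<noteq> 0 \<longleftrightarrow> p1 i < k"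
    and front2: "\<And>i. i < m \<Longrightarrow> g (Suc i) \<noteq> 0 \<longleftrightarrow> p2 i < k"
    and h1: "\<And>i. i < m \<Longrightarrow> p1 i < k \<Longrightarrow> h1 (p1 i) = g (Suc i) - 1"
    and h2: "\<And>i. i < m \<Longrightarrow> p2 i < k \<Longrightarrow> h2 (p2 i) = g (Suc i) - 1"
    using v1 v2 unfolding gam_factor_def by auto
  obtain p1' where p1'_lt: "\<And>j. j < m \<Longrightarrow> p1' j < m" and p1_p1': "\<And>j. j < m \<Longrightarrow> p1 (p1' j) = j"
    and p1'_p1: "\<And>i. i < m \<Longrightarrow> p1' (p1 i) = i"
    using bij_betw_lessThan_inverse[OF p1] by blast
  define r where "r j = p2 (p1' j)" for j
  define r2 where "r2 i = r (i + k) - k" for i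
  have r_lt_k: "r j < k \<longleftrightarrow> j < k" if "j < m" for j
    unfolding r_def using front1[of "p1' j"] front2[of "p1' j"] p1'_lt p1_p1' that by simp
  have r_lt_m: "r j < m" if "j < m" for j
    unfolding r_def using bij_betw_apply[OF p2] p1'_lt that by simp
  show ?thesis
  proof
    show "r \<in> phi_hom k k"
      unfolding phi_hom_def using r_lt_k \<open>k \<le> m\<close> by auto
    have "k \<le> r (x + k)" "r (x + k) < m" if "x < m - k" for x
      using r_lt_k[of "x + k"] r_lt_m[of "x + k"] that by (auto simp: less_diff_conv)
    then show "r2 \<in> phi_hom (m - k) (m - k)"
      unfolding phi_hom_def r2_def by (auto simp: diff_less_mono)
    show "p2 i = phi_plus k k r r2 (p1 i)" if "i < m" for i
      using that r_lt_k[of "p1 i"] bij_betw_apply[OF p1] p1'_p1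
      by (auto simp: phi_plus_def r2_def r_def)
    show "h1 j = h2 (r j)" if "j < k" for j
      using that \<open>k \<le> m\<close> h1[of "p1' j"] h2[of "p1' j"] front1[of "p1' j"] front2[of "p1' j"]
        p1'_lt p1_p1' by (simp add: r_def)
  qed
qed

lemma gam_factor_comp:
  assumes v1: "gam_factor m n f k1 p1 h1" and v2: "gam_factor n l g k2 p2 h2"
    and g: "g \<in> gam_hom n l"
    and "j \<le> k1" and q: "bij_betw q {..<k1} {..<k1}" and "f1 \<in> phi_hom j k2"
    and split: "\<And>i. i < k1 \<Longrightarrow> p2 (h1 i) = phi_plus j k2 f1 f2 (q i)"
  shows "gam_factor m l (g \<circ> f) j (phi_plus k1 k1 q id \<circ> p1) (h2 \<circ> f1)"
proof -
  let ?P = "phi_plus k1 k1 q id"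
  have "k1 \<le> m" and p1: "bij_betw p1 {..<m} {..<m}" and "h1 \<in> phi_hom k1 n"
    and front1: "\<And>i. i < m \<Longrightarrow> f (Suc i) \<noteq> 0 \<longleftrightarrow> p1 i < k1"
    and h1: "\<And>i. i < m \<Longrightarrow> p1 i < k1 \<Longrightarrow> h1 (p1 i) = f (Suc i) - 1"
    and "h2 \<in> phi_hom k2 l"
    and front2: "\<And>i. i < n \<Longrightarrow> g (Suc i) \<noteq> 0 \<longleftrightarrow> p2 i < k2"
    and h2: "\<And>i. i < n \<Longrightarrow> p2 i < k2 \<Longrightarrow> h2 (p2 i) = g (Suc i) - 1"
    using v1 v2 unfolding gam_factor_def by auto
  have h1_lt: "h1 i < n" if "i < k1" for i
    using \<open>h1 \<in> phi_hom k1 n\<close> that by (auto simp: phi_hom_def)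
  have f_Suc: "f (Suc i) = Suc (h1 (p1 i))" if "i < m" "p1 i < k1" for i
    using front1[of i] h1[of i] that by simp
  have q_front: "q i < j \<longleftrightarrow> p2 (h1 i) < k2" and f1_q: "q i < j \<Longrightarrow> f1 (q i) = p2 (h1 i)"
    if "i < k1" for i
    using split[OF that] \<open>f1 \<in> phi_hom j k2\<close> by (auto simp: phi_plus_def phi_hom_def)
  have "(g \<circ> f) (Suc i) \<noteq> 0 \<longleftrightarrow> (?P \<circ> p1) i < j" if "i < m" for i
  proof (cases "p1 i < k1")
    case True
    then show ?thesis
      using that f_Suc front2[of "h1 (p1 i)"] h1_lt q_front by (simp add: phi_plus_def)
  next
    case False
    then show ?thesis
      using that front1[of i] g \<open>j \<le> k1\<close> by (simp add: gam_hom_def phi_plus_def)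
  qed
  moreover have "(h2 \<circ> f1) ((?P \<circ> p1) i) = (g \<circ> f) (Suc i) - 1" if "i < m" "(?P \<circ> p1) i < j" for i
  proof -
    have "p1 i < k1"
      using that \<open>j \<le> k1\<close> by (cases "p1 i < k1") (auto simp: phi_plus_def)
    then show ?thesis
      using that f_Suc q_front f1_q h1_lt h2 by (simp add: phi_plus_def)
  qed
  moreover have "h2 \<circ> f1 \<in> phi_hom j l"
    using \<open>f1 \<in> phi_hom j k2\<close> \<open>h2 \<in> phi_hom k2 l\<close> by (auto simp: phi_hom_def)
  ultimately show ?thesis
    unfolding gam_factor_def
    using \<open>j \<le> k1\<close> \<open>k1 \<le> m\<close> bij_betw_trans[OF p1 bij_betw_phi_plus_id[OF q \<open>k1 \<le> m\<close>]] by auto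
qed

locale cartesian_weq =
  fixes C :: "('o, 'm) ccat" and W :: "'m set"
  assumes cartesian_weq: "cartesian_cat_with_equivalences C W"
begin

abbreviation "ob \<equiv> c_ob C"
abbreviation "ar \<equiv> c_arr C"
abbreviation "dm \<equiv> c_dom C"
abbreviation "cd \<equiv> c_cod C"
abbreviation "cid \<equiv> c_id C"
abbreviation "prd \<equiv> c_prod C"
abbreviation "one \<equiv> c_one C"
abbreviation "pr1 \<equiv> c_pr1 C"
abbreviation "pr2 \<equiv> c_pr2 C"
abbreviation "bang \<equiv> c_bang C"
abbreviation cmp :: "'m \<Rightarrow> 'm \<Rightarrow> 'm" (infixr "\<cdot>" 55) where "cmp \<equiv> c_comp C"
abbreviation pair :: "'m \<Rightarrow> 'm \<Rightarrow> 'm" ("\<langle>_, _\<rangle>") where "pair \<equiv> c_pair C"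
abbreviation tensor :: "'m \<Rightarrow> 'm \<Rightarrow> 'm" (infixl "\<otimes>" 65) where "tensor \<equiv> c_tensor C"

lemma category: "is_category C"
  and finite_products: "has_chosen_finite_products C"
  using cartesian_weq unfolding cartesian_cat_with_equivalences_def by auto

lemma hom_iff: "f \<in> c_hom C a b \<longleftrightarrow> f \<in> ar \<and> dm f = a \<and> cd f = b"
  by (simp add: c_hom_def)

lemma dm_ob [simp]: "f \<in> ar \<Longrightarrow> dm f \<in> ob"
  and cd_ob [simp]: "f \<in> ar \<Longrightarrow> cd f \<in> ob"
  using category unfolding is_category_def by auto

lemma id_ar [simp]: "a \<in> ob \<Longrightarrow> cid a \<in> ar"
  and id_dm [simp]: "a \<in> ob \<Longrightarrow> dm (cid a) = a"
  and id_cd [simp]: "a \<in> ob \<Longrightarrow> cd (cid a) = a"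
  using category unfolding is_category_def hom_iff by auto

lemma cmp_ar [simp]: "f \<in> ar \<Longrightarrow> g \<in> ar \<Longrightarrow> cd f = dm g \<Longrightarrow> g \<cdot> f \<in> ar"
  and cmp_dm [simp]: "f \<in> ar \<Longrightarrow> g \<in> ar \<Longrightarrow> cd f = dm g \<Longrightarrow> dm (g \<cdot> f) = dm f"
  and cmp_cd [simp]: "f \<in> ar \<Longrightarrow> g \<in> ar \<Longrightarrow> cd f = dm g \<Longrightarrow> cd (g \<cdot> f) = cd g"
proof -
  assume "f \<in> ar" "g \<in> ar" "cd f = dm g"
  then have "f \<in> c_hom C (dm f) (cd f)" "g \<in> c_hom C (cd f) (cd g)"
    by (auto simp: hom_iff)
  then have "g \<cdot> f \<in> c_hom C (dm f) (cd g)"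
    using category unfolding is_category_def by blast
  then show "g \<cdot> f \<in> ar" "dm (g \<cdot> f) = dm f" "cd (g \<cdot> f) = cd g"
    by (auto simp: hom_iff)
qed

lemma id_left [simp]: "f \<in> ar \<Longrightarrow> cd f = a \<Longrightarrow> cid a \<cdot> f = f"
  and id_right [simp]: "f \<in> ar \<Longrightarrow> dm f = a \<Longrightarrow> f \<cdot> cid a = f"
  using category unfolding is_category_def hom_iff by auto

lemma cmp_assoc:
  "f \<in> ar \<Longrightarrow> g \<in> ar \<Longrightarrow> h \<in> ar \<Longrightarrow> cd f = dm g \<Longrightarrow> cd g = dm h \<Longrightarrow>
   (h \<cdot> g) \<cdot> f = h \<cdot> g \<cdot> f"
proof -
  assume "f \<in> ar" "g \<in> ar" "h \<in> ar" "cd f = dm g" "cd g = dm h"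
  then have "f \<in> c_hom C (dm f) (cd f)" "g \<in> c_hom C (cd f) (cd g)" "h \<in> c_hom C (cd g) (cd h)"
    by (auto simp: hom_iff)
  then show ?thesis
    using category unfolding is_category_def by metis
qed

lemma precompose_eq:
  "g \<cdot> f = g' \<cdot> f' \<Longrightarrow> f \<in> ar \<Longrightarrow> g \<in> ar \<Longrightarrow> f' \<in> ar \<Longrightarrow> g' \<in> ar \<Longrightarrow> x \<in> ar \<Longrightarrow>
   cd f = dm g \<Longrightarrow> cd f' = dm g' \<Longrightarrow> cd x = dm f \<Longrightarrow> cd x = dm f' \<Longrightarrow> g \<cdot> f \<cdot> x = g' \<cdot> f' \<cdot> x"
  by (metis cmp_assoc)

lemma one_ob [simp]: "one \<in> ob"
  and bang_ar [simp]: "a \<in> ob \<Longrightarrow> bang a \<in> ar"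
  and bang_dm [simp]: "a \<in> ob \<Longrightarrow> dm (bang a) = a"
  and bang_cd [simp]: "a \<in> ob \<Longrightarrow> cd (bang a) = one"
  using finite_products unfolding has_chosen_finite_products_def hom_iff by auto

lemma bang_unique: "f \<in> ar \<Longrightarrow> cd f = one \<Longrightarrow> f = bang (dm f)"
  using finite_products unfolding has_chosen_finite_products_def hom_iff by auto

lemma bang_cmp:
  assumes "f \<in> ar" "a \<in> ob" "cd f = a"
  shows "bang a \<cdot> f = bang (dm f)"
proof -
  have "bang a \<cdot> f = bang (dm (bang a \<cdot> f))"
    by (rule bang_unique) (use assms in simp_all)
  also have "dm (bang a \<cdot> f) = dm f"
    using assms by simp
  finally show ?thesis .
qed

lemma prd_ob [simp]: "a \<in> ob \<Longrightarrow> b \<in> ob \<Longrightarrow> prd a b \<in> ob"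
  and pr1_ar [simp]: "a \<in> ob \<Longrightarrow> b \<in> ob \<Longrightarrow> pr1 a b \<in> ar"
  and pr1_dm [simp]: "a \<in> ob \<Longrightarrow> b \<in> ob \<Longrightarrow> dm (pr1 a b) = prd a b"
  and pr1_cd [simp]: "a \<in> ob \<Longrightarrow> b \<in> ob \<Longrightarrow> cd (pr1 a b) = a"
  and pr2_ar [simp]: "a \<in> ob \<Longrightarrow> b \<in> ob \<Longrightarrow> pr2 a b \<in> ar"
  and pr2_dm [simp]: "a \<in> ob \<Longrightarrow> b \<in> ob \<Longrightarrow> dm (pr2 a b) = prd a b"
  and pr2_cd [simp]: "a \<in> ob \<Longrightarrow> b \<in> ob \<Longrightarrow> cd (pr2 a b) = b"
  using finite_products unfolding has_chosen_finite_products_def hom_iff by auto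

lemma pair_ar [simp]: "f \<in> ar \<Longrightarrow> g \<in> ar \<Longrightarrow> dm f = dm g \<Longrightarrow> \<langle>f, g\<rangle> \<in> ar"
  and pair_dm [simp]: "f \<in> ar \<Longrightarrow> g \<in> ar \<Longrightarrow> dm f = dm g \<Longrightarrow> dm \<langle>f, g\<rangle> = dm f"
  and pair_cd [simp]: "f \<in> ar \<Longrightarrow> g \<in> ar \<Longrightarrow> dm f = dm g \<Longrightarrow> cd \<langle>f, g\<rangle> = prd (cd f) (cd g)"
  and pr1_pair: "f \<in> ar \<Longrightarrow> g \<in> ar \<Longrightarrow> dm f = dm g \<Longrightarrow> pr1 (cd f) (cd g) \<cdot> \<langle>f, g\<rangle> = f"
  and pr2_pair: "f \<in> ar \<Longrightarrow> g \<in> ar \<Longrightarrow> dm f = dm g \<Longrightarrow> pr2 (cd f) (cd g) \<cdot> \<langle>f, g\<rangle> = g"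
proof -
  assume "f \<in> ar" "g \<in> ar" "dm f = dm g"
  then have "f \<in> c_hom C (dm f) (cd f)" "g \<in> c_hom C (dm f) (cd g)"
    by (auto simp: hom_iff)
  then have "\<langle>f, g\<rangle> \<in> c_hom C (dm f) (prd (cd f) (cd g)) \<and>
      pr1 (cd f) (cd g) \<cdot> \<langle>f, g\<rangle> = f \<and> pr2 (cd f) (cd g) \<cdot> \<langle>f, g\<rangle> = g"
    using finite_products unfolding has_chosen_finite_products_def by blast
  then show "\<langle>f, g\<rangle> \<in> ar" "dm \<langle>f, g\<rangle> = dm f" "cd \<langle>f, g\<rangle> = prd (cd f) (cd g)"
    "pr1 (cd f) (cd g) \<cdot> \<langle>f, g\<rangle> = f" "pr2 (cd f) (cd g) \<cdot> \<langle>f, g\<rangle> = g"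
    by (auto simp: hom_iff)
qed

lemma pr1_pair' [simp]:
    "f \<in> ar \<Longrightarrow> g \<in> ar \<Longrightarrow> dm f = dm g \<Longrightarrow> cd f = a \<Longrightarrow> cd g = b \<Longrightarrow> pr1 a b \<cdot> \<langle>f, g\<rangle> = f"
  and pr2_pair' [simp]:
    "f \<in> ar \<Longrightarrow> g \<in> ar \<Longrightarrow> dm f = dm g \<Longrightarrow> cd f = a \<Longrightarrow> cd g = b \<Longrightarrow> pr2 a b \<cdot> \<langle>f, g\<rangle> = g"
  using pr1_pair pr2_pair by auto

lemma pair_eta:
  "h \<in> ar \<Longrightarrow> a \<in> ob \<Longrightarrow> b \<in> ob \<Longrightarrow> cd h = prd a b \<Longrightarrow> \<langle>pr1 a b \<cdot> h, pr2 a b \<cdot> h\<rangle> = h"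
  using finite_products unfolding has_chosen_finite_products_def hom_iff by metis

lemma pair_unique:
  "h \<in> ar \<Longrightarrow> a \<in> ob \<Longrightarrow> b \<in> ob \<Longrightarrow> cd h = prd a b \<Longrightarrow>
   pr1 a b \<cdot> h = f \<Longrightarrow> pr2 a b \<cdot> h = g \<Longrightarrow> h = \<langle>f, g\<rangle>"
  by (metis pair_eta)

lemma pair_proj: "a \<in> ob \<Longrightarrow> b \<in> ob \<Longrightarrow> \<langle>pr1 a b, pr2 a b\<rangle> = cid (prd a b)"
  using pair_eta[of "cid (prd a b)" a b] by simp

lemma pair_cmp:
  "f \<in> ar \<Longrightarrow> g \<in> ar \<Longrightarrow> dm f = dm g \<Longrightarrow> k \<in> ar \<Longrightarrow> cd k = dm f \<Longrightarrow>
   \<langle>f, g\<rangle> \<cdot> k = \<langle>f \<cdot> k, g \<cdot> k\<rangle>"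
  by (rule pair_unique[where a = "cd f" and b = "cd g"]) (simp_all add: cmp_assoc[symmetric])

lemma tensor_def': "f \<otimes> g = \<langle>f \<cdot> pr1 (dm f) (dm g), g \<cdot> pr2 (dm f) (dm g)\<rangle>"
  by (simp add: c_tensor_def)

lemma tensor_ar [simp]: "f \<in> ar \<Longrightarrow> g \<in> ar \<Longrightarrow> f \<otimes> g \<in> ar"
  and tensor_dm [simp]: "f \<in> ar \<Longrightarrow> g \<in> ar \<Longrightarrow> dm (f \<otimes> g) = prd (dm f) (dm g)"
  and tensor_cd [simp]: "f \<in> ar \<Longrightarrow> g \<in> ar \<Longrightarrow> cd (f \<otimes> g) = prd (cd f) (cd g)"
  by (simp_all add: tensor_def')

lemma pr1_tensor [simp]:
    "f \<in> ar \<Longrightarrow> g \<in> ar \<Longrightarrow> cd f = a \<Longrightarrow> cd g = b \<Longrightarrow> pr1 a b \<cdot> (f \<otimes> g) = f \<cdot> pr1 (dm f) (dm g)"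
  and pr2_tensor [simp]:
    "f \<in> ar \<Longrightarrow> g \<in> ar \<Longrightarrow> cd f = a \<Longrightarrow> cd g = b \<Longrightarrow> pr2 a b \<cdot> (f \<otimes> g) = g \<cdot> pr2 (dm f) (dm g)"
  by (simp_all add: tensor_def')

lemma tensor_pair:
  "f \<in> ar \<Longrightarrow> g \<in> ar \<Longrightarrow> h \<in> ar \<Longrightarrow> k \<in> ar \<Longrightarrow> dm h = dm k \<Longrightarrow> cd h = dm f \<Longrightarrow> cd k = dm g \<Longrightarrow>
   (f \<otimes> g) \<cdot> \<langle>h, k\<rangle> = \<langle>f \<cdot> h, g \<cdot> k\<rangle>"
  by (simp add: tensor_def' pair_cmp cmp_assoc)

lemma c_assoc_ar [simp]: "a \<in> ob \<Longrightarrow> b \<in> ob \<Longrightarrow> c \<in> ob \<Longrightarrow> c_assoc C a b c \<in> ar"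
  and c_assoc_dm [simp]: "a \<in> ob \<Longrightarrow> b \<in> ob \<Longrightarrow> c \<in> ob \<Longrightarrow> dm (c_assoc C a b c) = prd a (prd b c)"
  and c_assoc_cd [simp]: "a \<in> ob \<Longrightarrow> b \<in> ob \<Longrightarrow> c \<in> ob \<Longrightarrow> cd (c_assoc C a b c) = prd (prd a b) c"
  unfolding c_assoc_def by simp_all

lemma c_assoc_pair:
  "x \<in> ar \<Longrightarrow> y \<in> ar \<Longrightarrow> z \<in> ar \<Longrightarrow> dm x = dm y \<Longrightarrow> dm y = dm z \<Longrightarrow>
   cd x = a \<Longrightarrow> cd y = b \<Longrightarrow> cd z = c \<Longrightarrow> c_assoc C a b c \<cdot> \<langle>x, \<langle>y, z\<rangle>\<rangle> = \<langle>\<langle>x, y\<rangle>, z\<rangle>"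
  using cd_ob[of x] cd_ob[of y] cd_ob[of z] unfolding c_assoc_def by (simp add: pair_cmp cmp_assoc)

lemma c_swap_pair:
  "x \<in> ar \<Longrightarrow> y \<in> ar \<Longrightarrow> dm x = dm y \<Longrightarrow> cd x = a \<Longrightarrow> cd y = b \<Longrightarrow> c_swap C a b \<cdot> \<langle>x, y\<rangle> = \<langle>y, x\<rangle>"
  using cd_ob[of x] cd_ob[of y] unfolding c_swap_def by (simp add: pair_cmp)

lemma pow_ob [simp]: "b \<in> ob \<Longrightarrow> c_pow C b n \<in> ob"
  by (induction n) auto

lemma tuple_hom:
  "a \<in> ob \<Longrightarrow> b \<in> ob \<Longrightarrow> (\<And>j. fs j \<in> ar \<and> dm (fs j) = a \<and> cd (fs j) = b) \<Longrightarrow>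
   c_tuple C a fs n \<in> ar \<and> dm (c_tuple C a fs n) = a \<and> cd (c_tuple C a fs n) = c_pow C b n"
  by (induction n arbitrary: fs) auto

lemma tuple_cmp:
  assumes "a \<in> ob" "b \<in> ob" "\<And>j. fs j \<in> ar \<and> dm (fs j) = a \<and> cd (fs j) = b"
    and "k \<in> ar" "cd k = a"
  shows "c_tuple C (dm k) (\<lambda>j. fs j \<cdot> k) n = c_tuple C a fs n \<cdot> k"
  using assms
proof (induction n arbitrary: fs)
  case 0
  then show ?case by (simp add: bang_cmp)
next
  case (Suc n)
  then show ?case
    using tuple_hom[of a b "\<lambda>j. fs (Suc j)" n] by (simp add: pair_cmp)
qed

lemma iso_W: "c_iso C f \<Longrightarrow> f \<in> W"
  and W_cmp: "f \<in> W \<Longrightarrow> g \<in> W \<Longrightarrow> cd f = dm g \<Longrightarrow> g \<cdot> f \<in> W"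
  and W_cancel_left: "f \<in> ar \<Longrightarrow> g \<in> W \<Longrightarrow> cd f = dm g \<Longrightarrow> g \<cdot> f \<in> W \<Longrightarrow> f \<in> W"
  and W_tensor: "f \<in> W \<Longrightarrow> g \<in> W \<Longrightarrow> f \<otimes> g \<in> W"
  using cartesian_weq unfolding cartesian_cat_with_equivalences_def by blast+

lemma inverse_W:
  "f \<in> ar \<Longrightarrow> g \<in> ar \<Longrightarrow> dm g = cd f \<Longrightarrow> cd g = dm f \<Longrightarrow>
   g \<cdot> f = cid (dm f) \<Longrightarrow> f \<cdot> g = cid (cd f) \<Longrightarrow> f \<in> W"
  by (rule iso_W) (auto simp: c_iso_def hom_iff)

lemma id_W: "a \<in> ob \<Longrightarrow> cid a \<in> W"
  by (rule inverse_W[where g = "cid a"]) auto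

lemma c_assoc_W:
  assumes ob: "a \<in> ob" "b \<in> ob" "c \<in> ob"
  shows "c_assoc C a b c \<in> W"
proof -
  define p where "p = pr1 (prd a b) c"
  define q where "q = pr2 (prd a b) c"
  define g where "g = \<langle>pr1 a b \<cdot> p, \<langle>pr2 a b \<cdot> p, q\<rangle>\<rangle>"
  have g: "g \<in> ar" "dm g = prd (prd a b) c" "cd g = prd a (prd b c)"
    unfolding g_def p_def q_def using ob by simp_all
  have "c_assoc C a b c \<cdot> g = \<langle>\<langle>pr1 a b \<cdot> p, pr2 a b \<cdot> p\<rangle>, q\<rangle>"
    unfolding g_def p_def q_def using ob by (intro c_assoc_pair) simp_all
  also have "\<langle>pr1 a b \<cdot> p, pr2 a b \<cdot> p\<rangle> = p"
    unfolding p_def using ob by (simp add: pair_cmp[symmetric] pair_proj)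
  finally have right: "c_assoc C a b c \<cdot> g = cid (prd (prd a b) c)"
    unfolding p_def q_def using ob by (simp add: pair_proj)
  have "g \<cdot> c_assoc C a b c
      = \<langle>pr1 a (prd b c), \<langle>pr1 b c \<cdot> pr2 a (prd b c), pr2 b c \<cdot> pr2 a (prd b c)\<rangle>\<rangle>"
    unfolding g_def p_def q_def c_assoc_def using ob by (simp add: pair_cmp cmp_assoc)
  also have "\<langle>pr1 b c \<cdot> pr2 a (prd b c), pr2 b c \<cdot> pr2 a (prd b c)\<rangle> = pr2 a (prd b c)"
    using ob by (simp add: pair_cmp[symmetric] pair_proj)
  finally have left: "g \<cdot> c_assoc C a b c = cid (prd a (prd b c))"
    using ob by (simp add: pair_proj)
  show ?thesis
    using ob g left right by (intro inverse_W[where g = g]) simp_all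
qed

lemma pair_bang_id_W:
  assumes a: "a \<in> ob"
  shows "\<langle>bang a, cid a\<rangle> \<in> W"
proof -
  have "bang a \<cdot> pr2 one a = pr1 one a"
    using a bang_unique[of "pr1 one a"] by (simp add: bang_cmp)
  then have "\<langle>bang a, cid a\<rangle> \<cdot> pr2 one a = cid (prd one a)"
    using a by (simp add: pair_cmp pair_proj)
  then show ?thesis
    using a by (intro inverse_W[where g = "pr2 one a"]) simp_all
qed

end

section \<open>From homotopy commutative monoids to special \<open>\<Gamma>\<close>-objects\<close>

locale hty_algebra = cartesian_weq C W for C :: "('o, 'm) ccat" and W +
  fixes XO :: "nat \<Rightarrow> 'o" and XM :: "nat \<Rightarrow> nat \<Rightarrow> (nat \<Rightarrow> nat) \<Rightarrow> 'm"
    and xi :: "nat \<Rightarrow> nat \<Rightarrow> 'm" and xi0 :: 'm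
  assumes hty_algebra: "hty_obj C W (XO, XM, xi, xi0)"
begin

lemma XO_ob [simp]: "XO n \<in> ob"
  and XM_hom: "f \<in> phi_hom m n \<Longrightarrow> XM m n f \<in> c_hom C (XO m) (XO n)"
  and XM_cong: "(\<And>i. i < m \<Longrightarrow> f i = g i) \<Longrightarrow> XM m n f = XM m n g"
  and XM_undefined: "f \<notin> phi_hom m n \<Longrightarrow> XM m n f = undefined"
  and XM_id: "XM n n id = cid (XO n)"
  and XM_comp: "f \<in> phi_hom m n \<Longrightarrow> g \<in> phi_hom n k \<Longrightarrow> XM m k (g \<circ> f) = XM n k g \<cdot> XM m n f"
  and xi_hom: "xi m n \<in> c_hom C (XO (m + n)) (prd (XO m) (XO n))"
  and xi0_hom: "xi0 \<in> c_hom C (XO 0) one"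
  and xi_natural: "f \<in> phi_hom m m' \<Longrightarrow> g \<in> phi_hom n n' \<Longrightarrow>
    xi m' n' \<cdot> XM (m + n) (m' + n') (phi_plus m m' f g) = (XM m m' f \<otimes> XM n n' g) \<cdot> xi m n"
  and xi_coassoc: "(xi l m \<otimes> cid (XO n)) \<cdot> xi (l + m) n =
    c_assoc C (XO l) (XO m) (XO n) \<cdot> (cid (XO l) \<otimes> xi m n) \<cdot> xi l (m + n)"
  and xi_counit_right: "(cid (XO n) \<otimes> xi0) \<cdot> xi n 0 = \<langle>cid (XO n), bang (XO n)\<rangle>"
  and xi_symmetric:
    "c_swap C (XO m) (XO n) \<cdot> xi m n = xi n m \<cdot> XM (m + n) (n + m) (phi_twist m n)"
  and xi0_W: "xi0 \<in> W"
  and xi_W: "xi m n \<in> W"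
  using hty_algebra unfolding hty_obj_def phi_functor_def by auto

lemma XM_ar [simp]: "f \<in> phi_hom m n \<Longrightarrow> XM m n f \<in> ar"
  and XM_dm [simp]: "f \<in> phi_hom m n \<Longrightarrow> dm (XM m n f) = XO m"
  and XM_cd [simp]: "f \<in> phi_hom m n \<Longrightarrow> cd (XM m n f) = XO n"
  using XM_hom by (auto simp: hom_iff)

lemma xi_ar [simp]: "xi m n \<in> ar"
  and xi_dm [simp]: "dm (xi m n) = XO (m + n)"
  and xi_cd [simp]: "cd (xi m n) = prd (XO m) (XO n)"
  using xi_hom by (auto simp: hom_iff)

lemma xi0_ar [simp]: "xi0 \<in> ar"
  and xi0_dm [simp]: "dm xi0 = XO 0"
  and xi0_cd [simp]: "cd xi0 = one"
  using xi0_hom by (auto simp: hom_iff)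

lemma xi0_eq_bang: "xi0 = bang (XO 0)"
  using bang_unique[of xi0] by simp

definition xi_fst :: "nat \<Rightarrow> nat \<Rightarrow> 'm" where
  "xi_fst m n = pr1 (XO m) (XO n) \<cdot> xi m n"

definition xi_snd :: "nat \<Rightarrow> nat \<Rightarrow> 'm" where
  "xi_snd m n = pr2 (XO m) (XO n) \<cdot> xi m n"

lemma xi_fst_ar [simp]: "xi_fst m n \<in> ar"
  and xi_fst_dm [simp]: "dm (xi_fst m n) = XO (m + n)"
  and xi_fst_cd [simp]: "cd (xi_fst m n) = XO m"
  and xi_snd_ar [simp]: "xi_snd m n \<in> ar"
  and xi_snd_dm [simp]: "dm (xi_snd m n) = XO (m + n)"
  and xi_snd_cd [simp]: "cd (xi_snd m n) = XO n"
  by (simp_all add: xi_fst_def xi_snd_def)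

lemma xi_eq_pair: "xi m n = \<langle>xi_fst m n, xi_snd m n\<rangle>"
  by (simp add: xi_fst_def xi_snd_def pair_eta)

lemma xi_fst_natural:
  "f \<in> phi_hom m m' \<Longrightarrow> g \<in> phi_hom n n' \<Longrightarrow>
   xi_fst m' n' \<cdot> XM (m + n) (m' + n') (phi_plus m m' f g) = XM m m' f \<cdot> xi_fst m n"
  unfolding xi_fst_def
  by (simp add: cmp_assoc phi_plus_hom xi_natural) (simp add: cmp_assoc[symmetric])

lemma xi_fst_natural_diff:
  assumes "k \<le> m" "k' \<le> m'" "f \<in> phi_hom k k'" "g \<in> phi_hom (m - k) (m' - k')"
  shows "xi_fst k' (m' - k') \<cdot> XM m m' (phi_plus k k' f g) = XM k k' f \<cdot> xi_fst k (m - k)"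
  using xi_fst_natural[OF assms(3,4)] assms(1,2) by simp

lemma xi_fst_coassoc: "xi_fst l m \<cdot> xi_fst (l + m) n = xi_fst l (m + n)"
proof -
  let ?a = "c_assoc C (XO l) (XO m) (XO n)"
  let ?p = "pr1 (XO l) (XO m) \<cdot> pr1 (prd (XO l) (XO m)) (XO n)"
  have "?p \<cdot> (xi l m \<otimes> cid (XO n)) \<cdot> xi (l + m) n = xi_fst l m \<cdot> xi_fst (l + m) n"
    unfolding xi_fst_def by (simp add: cmp_assoc[symmetric]) (simp add: cmp_assoc)
  moreover have "?p \<cdot> ?a = pr1 (XO l) (prd (XO m) (XO n))"
    unfolding c_assoc_def by (simp add: cmp_assoc)
  then have "?p \<cdot> ?a \<cdot> (cid (XO l) \<otimes> xi m n) \<cdot> xi l (m + n) = xi_fst l (m + n)"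
    unfolding xi_fst_def by (simp add: cmp_assoc[symmetric])
  ultimately show ?thesis
    using xi_coassoc by simp
qed

lemma xi_fst_0: "xi_fst m 0 = cid (XO m)"
proof -
  have "pr1 (XO m) one \<cdot> (cid (XO m) \<otimes> xi0) \<cdot> xi m 0 = cid (XO m)"
    by (simp add: xi_counit_right)
  then show ?thesis
    unfolding xi_fst_def by (simp add: cmp_assoc[symmetric])
qed

lemma xi_fst_twist: "xi_fst n m \<cdot> XM (m + n) (n + m) (phi_twist m n) = xi_snd m n"
proof -
  have "xi_fst n m \<cdot> XM (m + n) (n + m) (phi_twist m n)
      = pr1 (XO n) (XO m) \<cdot> c_swap C (XO m) (XO n) \<cdot> xi m n"
    unfolding xi_fst_def using phi_twist_hom by (simp add: cmp_assoc xi_symmetric)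
  also have "\<dots> = xi_snd m n"
    unfolding xi_snd_def c_swap_def by (simp add: cmp_assoc[symmetric])
  finally show ?thesis .
qed

definition factor_arrow :: "nat \<Rightarrow> nat \<Rightarrow> nat \<Rightarrow> (nat \<Rightarrow> nat) \<Rightarrow> (nat \<Rightarrow> nat) \<Rightarrow> 'm" where
  "factor_arrow m n k p h = XM k n h \<cdot> xi_fst k (m - k) \<cdot> XM m m p"

lemma factor_arrow_hom:
  assumes "gam_factor m n g k p h"
  shows "factor_arrow m n k p h \<in> ar \<and> dm (factor_arrow m n k p h) = XO m \<and>
    cd (factor_arrow m n k p h) = XO n"
  using assms unfolding gam_factor_def factor_arrow_def by (auto dest: bij_betw_imp_phi_hom)

lemma factor_arrow_unique:
  assumes v1: "gam_factor m n g k1 p1 h1" and v2: "gam_factor m n g k p2 h2"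
  shows "factor_arrow m n k1 p1 h1 = factor_arrow m n k p2 h2"
proof -
  have "k1 = k"
    using gam_factor_card[OF v1] gam_factor_card[OF v2] by simp
  with v1 obtain r r2 where r: "r \<in> phi_hom k k" and r2: "r2 \<in> phi_hom (m - k) (m - k)"
    and p2: "\<And>i. i < m \<Longrightarrow> p2 i = phi_plus k k r r2 (p1 i)" and h1: "\<And>j. j < k \<Longrightarrow> h1 j = h2 (r j)"
    using gam_factor_unique[OF _ v2] by blast
  have "k \<le> m" and p1: "p1 \<in> phi_hom m m" and h2: "h2 \<in> phi_hom k n"
    using v2 \<open>k1 = k\<close> v1 unfolding gam_factor_def by (auto intro: bij_betw_imp_phi_hom)
  have rr2: "phi_plus k k r r2 \<in> phi_hom m m"
    using phi_plus_hom[OF r r2] \<open>k \<le> m\<close> by simp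
  have "XM m m p2 = XM m m (phi_plus k k r r2 \<circ> p1)"
    by (rule XM_cong) (simp add: p2)
  also have "\<dots> = XM m m (phi_plus k k r r2) \<cdot> XM m m p1"
    by (rule XM_comp[OF p1 rr2])
  finally have "factor_arrow m n k p2 h2
      = XM k n h2 \<cdot> (xi_fst k (m - k) \<cdot> XM m m (phi_plus k k r r2)) \<cdot> XM m m p1"
    unfolding factor_arrow_def using \<open>k \<le> m\<close> p1 rr2 h2 by (simp add: cmp_assoc)
  also have "\<dots> = (XM k n h2 \<cdot> XM k k r) \<cdot> xi_fst k (m - k) \<cdot> XM m m p1"
    using \<open>k \<le> m\<close> p1 r h2 by (simp add: xi_fst_natural_diff[OF _ _ r r2] cmp_assoc)
  also have "XM k n h2 \<cdot> XM k k r = XM k n h1"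
    using XM_comp[OF r h2] XM_cong[of k h1 "h2 \<circ> r"] h1 by simp
  finally show ?thesis
    unfolding factor_arrow_def \<open>k1 = k\<close> ..
qed

text \<open>By \<open>factor_arrow_unique\<close> the chosen factorisation does not matter; off \<open>gam_hom\<close> the
  value is \<open>undefined\<close>, as \<open>gam_functor\<close> demands.\<close>

definition gam_arrow :: "nat \<Rightarrow> nat \<Rightarrow> (nat \<Rightarrow> nat) \<Rightarrow> 'm" where
  "gam_arrow m n g = (if g \<in> gam_hom m n then
     (case SOME (k, p, h). gam_factor m n g k p h of (k, p, h) \<Rightarrow> factor_arrow m n k p h)
   else undefined)"

lemma gam_arrow_eq:
  assumes g: "g \<in> gam_hom m n" and v: "gam_factor m n g k p h"
  shows "gam_arrow m n g = factor_arrow m n k p h"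
proof -
  have "\<exists>x. case x of (k, p, h) \<Rightarrow> gam_factor m n g k p h"
    using v by auto
  then have "case SOME (k, p, h). gam_factor m n g k p h of (k, p, h) \<Rightarrow> gam_factor m n g k p h"
    by (rule someI_ex)
  then obtain k' p' h' where "(SOME (k, p, h). gam_factor m n g k p h) = (k', p', h')"
    and "gam_factor m n g k' p' h'"
    by (auto split: prod.splits)
  then show ?thesis
    unfolding gam_arrow_def using g factor_arrow_unique[OF _ v] by simp
qed

lemma gam_arrow_ar [simp]: "g \<in> gam_hom m n \<Longrightarrow> gam_arrow m n g \<in> ar"
  and gam_arrow_dm [simp]: "g \<in> gam_hom m n \<Longrightarrow> dm (gam_arrow m n g) = XO m"
  and gam_arrow_cd [simp]: "g \<in> gam_hom m n \<Longrightarrow> cd (gam_arrow m n g) = XO n"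
  by (metis gam_factor_exists gam_arrow_eq factor_arrow_hom)+

lemma gam_arrow_phi_to_gam: "f \<in> phi_hom m n \<Longrightarrow> gam_arrow m n (phi_to_gam f) = XM m n f"
proof -
  assume f: "f \<in> phi_hom m n"
  have "gam_factor m n (phi_to_gam f) m id f"
    unfolding gam_factor_def using f by (auto simp: phi_to_gam_def)
  then show ?thesis
    using f by (simp add: gam_arrow_eq[OF phi_to_gam_hom[OF f]] factor_arrow_def XM_id xi_fst_0)
qed

lemma gam_arrow_gam_pr1: "gam_arrow (m + n) m (gam_pr1 m n) = xi_fst m n"
proof -
  have "gam_factor (m + n) m (gam_pr1 m n) m id id"
    unfolding gam_factor_def by (auto simp: gam_pr1_def phi_hom_def)
  then show ?thesis
    by (simp add: gam_arrow_eq[OF gam_pr1_hom] factor_arrow_def XM_id)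
qed

lemma gam_arrow_gam_pr2: "gam_arrow (m + n) n (gam_pr2 m n) = xi_snd m n"
proof -
  have "gam_factor (m + n) n (gam_pr2 m n) n (phi_twist m n) id"
    unfolding gam_factor_def using bij_betw_phi_twist
    by (auto simp: gam_pr2_def phi_hom_def phi_twist_def)
  then have "gam_arrow (m + n) n (gam_pr2 m n) = xi_fst n m \<cdot> XM (m + n) (n + m) (phi_twist m n)"
    using phi_twist_hom[of m n]
    by (simp add: gam_arrow_eq[OF gam_pr2_hom] factor_arrow_def XM_id add.commute)
  then show ?thesis
    by (simp add: xi_fst_twist)
qed

lemma gam_arrow_undefined: "g \<notin> gam_hom m n \<Longrightarrow> gam_arrow m n g = undefined"
  by (simp add: gam_arrow_def)

lemma gam_arrow_cong:
  assumes "\<And>i. i \<le> m \<Longrightarrow> f i = g i"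
  shows "gam_arrow m n f = gam_arrow m n g"
proof (cases "f \<in> gam_hom m n")
  case True
  have "gam_factor m n f k p h \<longleftrightarrow> gam_factor m n g k p h" for k p h
    using assms unfolding gam_factor_def by (auto simp: Suc_le_eq)
  moreover have "g \<in> gam_hom m n"
    using True assms by (auto simp: gam_hom_def Pi_iff)
  ultimately show ?thesis
    using True by (metis gam_factor_exists gam_arrow_eq)
next
  case False
  then have "g \<notin> gam_hom m n"
    using assms by (auto simp: gam_hom_def Pi_iff)
  then show ?thesis
    using False by (simp add: gam_arrow_undefined)
qed

lemma gam_arrow_id: "gam_arrow n n id = cid (XO n)"
  using gam_arrow_phi_to_gam[of id n n] by (simp add: phi_to_gam_id phi_hom_def XM_id)

lemma xi_fst_XM_block:
  assumes f: "f \<in> phi_hom a n" and "b \<le> n" "j \<le> a" and q: "q \<in> phi_hom a a"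
    and f1: "f1 \<in> phi_hom j b" and f2: "f2 \<in> phi_hom (a - j) (n - b)"
    and split: "\<And>i. i < a \<Longrightarrow> f i = phi_plus j b f1 f2 (q i)"
  shows "xi_fst b (n - b) \<cdot> XM a n f = XM j b f1 \<cdot> xi_fst j (a - j) \<cdot> XM a a q"
proof -
  have f12: "phi_plus j b f1 f2 \<in> phi_hom a n"
    using phi_plus_hom[OF f1 f2] assms(2,3) by simp
  have "XM a n f = XM a n (phi_plus j b f1 f2 \<circ> q)"
    by (rule XM_cong) (simp add: split)
  also have "\<dots> = XM a n (phi_plus j b f1 f2) \<cdot> XM a a q"
    by (rule XM_comp[OF q f12])
  finally show ?thesis
    using precompose_eq[OF xi_fst_natural_diff[OF assms(3,2) f1 f2]] assms(2,3) f1 f12 q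
    by simp
qed

lemma factor_arrow_comp:
  assumes v1: "gam_factor m n f k1 p1 h1" and v2: "gam_factor n l g k2 p2 h2"
    and "j \<le> k1" and q: "q \<in> phi_hom k1 k1" and f1: "f1 \<in> phi_hom j k2"
    and f2: "f2 \<in> phi_hom (k1 - j) (n - k2)"
    and split: "\<And>i. i < k1 \<Longrightarrow> (p2 \<circ> h1) i = phi_plus j k2 f1 f2 (q i)"
  shows "factor_arrow n l k2 p2 h2 \<cdot> factor_arrow m n k1 p1 h1
    = factor_arrow m l j (phi_plus k1 k1 q id \<circ> p1) (h2 \<circ> f1)"
proof -
  have "k1 \<le> m" and p1: "p1 \<in> phi_hom m m" and h1: "h1 \<in> phi_hom k1 n"
    and "k2 \<le> n" and p2: "p2 \<in> phi_hom n n" and h2: "h2 \<in> phi_hom k2 l"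
    using v1 v2 unfolding gam_factor_def by (auto intro: bij_betw_imp_phi_hom)
  define P where "P = phi_plus k1 k1 q id"
  have P: "P \<in> phi_hom m m"
    using phi_plus_hom[OF q, of id "m - k1" "m - k1"] \<open>k1 \<le> m\<close> by (simp add: P_def phi_hom_def)
  have block: "xi_fst k2 (n - k2) \<cdot> XM n n p2 \<cdot> XM k1 n h1
      = XM j k2 f1 \<cdot> xi_fst j (k1 - j) \<cdot> XM k1 k1 q"
    using xi_fst_XM_block[OF _ \<open>k2 \<le> n\<close> \<open>j \<le> k1\<close> q f1 f2 split] h1 p2
    unfolding XM_comp[OF h1 p2] by (auto simp: phi_hom_def)
  have swap: "xi_fst k1 (m - k1) \<cdot> XM m m P = XM k1 k1 q \<cdot> xi_fst k1 (m - k1)"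
    unfolding P_def using \<open>k1 \<le> m\<close> q by (intro xi_fst_natural_diff) (auto simp: phi_hom_def)
  have coassoc: "xi_fst j (k1 - j) \<cdot> xi_fst k1 (m - k1) = xi_fst j (m - j)"
    using xi_fst_coassoc[of j "k1 - j" "m - k1"] \<open>j \<le> k1\<close> \<open>k1 \<le> m\<close> by simp
  have "factor_arrow n l k2 p2 h2 \<cdot> factor_arrow m n k1 p1 h1
      = XM k2 l h2 \<cdot> (xi_fst k2 (n - k2) \<cdot> XM n n p2 \<cdot> XM k1 n h1) \<cdot> xi_fst k1 (m - k1) \<cdot> XM m m p1"
    unfolding factor_arrow_def using h1 h2 p1 p2 \<open>k1 \<le> m\<close> \<open>k2 \<le> n\<close> by (simp add: cmp_assoc)
  also have "\<dots> = XM k2 l h2 \<cdot> XM j k2 f1 \<cdot> xi_fst j (k1 - j) \<cdot>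
      (XM k1 k1 q \<cdot> xi_fst k1 (m - k1)) \<cdot> XM m m p1"
    unfolding block using f1 q p1 \<open>j \<le> k1\<close> \<open>k1 \<le> m\<close> by (simp add: cmp_assoc)
  also have "\<dots> = XM k2 l h2 \<cdot> XM j k2 f1 \<cdot>
      (xi_fst j (k1 - j) \<cdot> xi_fst k1 (m - k1)) \<cdot> XM m m P \<cdot> XM m m p1"
    unfolding swap[symmetric] using P p1 \<open>j \<le> k1\<close> \<open>k1 \<le> m\<close> by (simp add: cmp_assoc)
  also have "\<dots> = factor_arrow m l j (P \<circ> p1) (h2 \<circ> f1)"
    unfolding factor_arrow_def coassoc XM_comp[OF p1 P] XM_comp[OF f1 h2]
    using P p1 f1 h2 \<open>j \<le> k1\<close> \<open>k1 \<le> m\<close> by (simp add: cmp_assoc)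
  finally show ?thesis
    unfolding P_def .
qed

lemma gam_arrow_comp:
  assumes f: "f \<in> gam_hom m n" and g: "g \<in> gam_hom n l"
  shows "gam_arrow m l (g \<circ> f) = gam_arrow n l g \<cdot> gam_arrow m n f"
proof -
  obtain k1 p1 h1 where v1: "gam_factor m n f k1 p1 h1"
    using gam_factor_exists[OF f] .
  obtain k2 p2 h2 where v2: "gam_factor n l g k2 p2 h2"
    using gam_factor_exists[OF g] .
  have "k2 \<le> n" and "p2 \<in> phi_hom n n" and "h1 \<in> phi_hom k1 n"
    using v1 v2 unfolding gam_factor_def by (auto intro: bij_betw_imp_phi_hom)
  then have "p2 \<circ> h1 \<in> phi_hom k1 n" and "k2 \<le> n"
    by (auto simp: phi_hom_def)
  then obtain j q f1 f2 where "j \<le> k1" and q: "bij_betw q {..<k1} {..<k1}"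
    and f1: "f1 \<in> phi_hom j k2" and f2: "f2 \<in> phi_hom (k1 - j) (n - k2)"
    and split: "\<And>i. i < k1 \<Longrightarrow> (p2 \<circ> h1) i = phi_plus j k2 f1 f2 (q i)"
    by (rule ex_phi_plus_factor) blast
  have "gam_factor m l (g \<circ> f) j (phi_plus k1 k1 q id \<circ> p1) (h2 \<circ> f1)"
    using gam_factor_comp[OF v1 v2 g \<open>j \<le> k1\<close> q f1] split by simp
  then show ?thesis
    using gam_arrow_eq[OF gam_comp_hom[OF f g]] gam_arrow_eq[OF f v1] gam_arrow_eq[OF g v2]
      factor_arrow_comp[OF v1 v2 \<open>j \<le> k1\<close> bij_betw_imp_phi_hom[OF q] f1 f2 split]
    by simp
qed

lemma gam_functor_gam_arrow: "gam_functor C XO gam_arrow"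
  unfolding gam_functor_def
  by (auto simp: hom_iff gam_arrow_undefined gam_arrow_id gam_arrow_comp intro: gam_arrow_cong)

end

section \<open>From special \<open>\<Gamma>\<close>-objects to homotopy commutative monoids\<close>

locale gamma_functor = cartesian_weq C W for C :: "('o, 'm) ccat" and W +
  fixes YO :: "nat \<Rightarrow> 'o" and YM :: "nat \<Rightarrow> nat \<Rightarrow> (nat \<Rightarrow> nat) \<Rightarrow> 'm"
  assumes gamma_functor: "gam_functor C YO YM"
begin

lemma YO_ob [simp]: "YO n \<in> ob"
  and YM_hom: "f \<in> gam_hom m n \<Longrightarrow> YM m n f \<in> c_hom C (YO m) (YO n)"
  and YM_cong: "(\<And>i. i \<le> m \<Longrightarrow> f i = g i) \<Longrightarrow> YM m n f = YM m n g"
  and YM_undefined: "f \<notin> gam_hom m n \<Longrightarrow> YM m n f = undefined"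
  and YM_id: "YM n n id = cid (YO n)"
  and YM_comp: "f \<in> gam_hom m n \<Longrightarrow> g \<in> gam_hom n k \<Longrightarrow> YM m k (g \<circ> f) = YM n k g \<cdot> YM m n f"
  using gamma_functor unfolding gam_functor_def by auto

lemma YM_ar [simp]: "f \<in> gam_hom m n \<Longrightarrow> YM m n f \<in> ar"
  and YM_dm [simp]: "f \<in> gam_hom m n \<Longrightarrow> dm (YM m n f) = YO m"
  and YM_cd [simp]: "f \<in> gam_hom m n \<Longrightarrow> cd (YM m n f) = YO n"
  using YM_hom by (auto simp: hom_iff)

lemma YM_comp_eq:
  "f \<in> gam_hom m n \<Longrightarrow> g \<in> gam_hom n k \<Longrightarrow> h \<in> gam_hom m k \<Longrightarrow>
   (\<And>i. i \<le> m \<Longrightarrow> g (f i) = h i) \<Longrightarrow> YM n k g \<cdot> YM m n f = YM m k h"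
  unfolding YM_comp[symmetric] by (rule YM_cong) simp

lemma YM_comp_cong:
  "f \<in> gam_hom m n \<Longrightarrow> g \<in> gam_hom n k \<Longrightarrow> f' \<in> gam_hom m n' \<Longrightarrow> g' \<in> gam_hom n' k \<Longrightarrow>
   (\<And>i. i \<le> m \<Longrightarrow> g (f i) = g' (f' i)) \<Longrightarrow> YM n k g \<cdot> YM m n f = YM n' k g' \<cdot> YM m n' f'"
  unfolding YM_comp[symmetric] by (rule YM_cong) simp

definition phi_arrow :: "nat \<Rightarrow> nat \<Rightarrow> (nat \<Rightarrow> nat) \<Rightarrow> 'm" where
  "phi_arrow m n f = (if f \<in> phi_hom m n then YM m n (phi_to_gam f) else undefined)"

definition colax_xi :: "nat \<Rightarrow> nat \<Rightarrow> 'm" where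
  "colax_xi m n = \<langle>YM (m + n) m (gam_pr1 m n), YM (m + n) n (gam_pr2 m n)\<rangle>"

definition colax_xi0 :: 'm where
  "colax_xi0 = bang (YO 0)"

definition segal_map :: "nat \<Rightarrow> 'm" where
  "segal_map n = c_tuple C (YO n) (\<lambda>j. YM n 1 (gam_rho n j)) n"

lemma phi_arrow_ar [simp]: "f \<in> phi_hom m n \<Longrightarrow> phi_arrow m n f \<in> ar"
  and phi_arrow_dm [simp]: "f \<in> phi_hom m n \<Longrightarrow> dm (phi_arrow m n f) = YO m"
  and phi_arrow_cd [simp]: "f \<in> phi_hom m n \<Longrightarrow> cd (phi_arrow m n f) = YO n"
  unfolding phi_arrow_def using phi_to_gam_hom by simp_all

lemma colax_xi_ar [simp]: "colax_xi m n \<in> ar"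
  and colax_xi_dm [simp]: "dm (colax_xi m n) = YO (m + n)"
  and colax_xi_cd [simp]: "cd (colax_xi m n) = prd (YO m) (YO n)"
  unfolding colax_xi_def using gam_pr1_hom[of m n] gam_pr2_hom[of m n] by simp_all

lemma colax_xi0_ar [simp]: "colax_xi0 \<in> ar"
  and colax_xi0_dm [simp]: "dm colax_xi0 = YO 0"
  and colax_xi0_cd [simp]: "cd colax_xi0 = one"
  by (simp_all add: colax_xi0_def)

lemma segal_map_hom:
  "segal_map n \<in> ar \<and> dm (segal_map n) = YO n \<and> cd (segal_map n) = c_pow C (YO 1) n"
  unfolding segal_map_def by (rule tuple_hom) (simp_all add: gam_rho_hom[simplified])

lemma segal_map_Suc: "segal_map (Suc n) = (cid (YO 1) \<otimes> segal_map n) \<cdot> colax_xi 1 n"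
proof -
  have pr1: "gam_pr1 1 n \<in> gam_hom (Suc n) 1" and pr2: "gam_pr2 1 n \<in> gam_hom (Suc n) n"
    using gam_pr1_hom[of 1 n] gam_pr2_hom[of 1 n] by simp_all
  have "YM (Suc n) 1 (gam_rho (Suc n) (Suc j)) = YM n 1 (gam_rho n j) \<cdot> YM (Suc n) n (gam_pr2 1 n)"
    for j
    unfolding gam_rho_Suc by (rule YM_comp[OF pr2 gam_rho_hom])
  then have "c_tuple C (YO (Suc n)) (\<lambda>j. YM (Suc n) 1 (gam_rho (Suc n) (Suc j))) n
      = c_tuple C (dm (YM (Suc n) n (gam_pr2 1 n)))
          (\<lambda>j. YM n 1 (gam_rho n j) \<cdot> YM (Suc n) n (gam_pr2 1 n)) n"
    using pr2 by simp
  also have "\<dots> = segal_map n \<cdot> YM (Suc n) n (gam_pr2 1 n)"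
    unfolding segal_map_def using pr2
    by (intro tuple_cmp[where b = "YO 1"]) (simp_all add: gam_rho_hom[simplified])
  finally show ?thesis
    unfolding segal_map_def[of "Suc n"] colax_xi_def using pr1 pr2 segal_map_hom[of n]
    by (simp add: gam_rho_0[of _ n] tensor_pair segal_map_def)
qed

lemma phi_functor_phi_arrow: "phi_functor C YO phi_arrow"
  unfolding phi_functor_def
proof (intro conjI allI impI)
  fix m n :: nat and f g :: "nat \<Rightarrow> nat"
  assume "\<forall>i<m. f i = g i"
  moreover from this have "f \<in> phi_hom m n \<longleftrightarrow> g \<in> phi_hom m n"
    by (auto simp: phi_hom_def Pi_iff)
  ultimately show "phi_arrow m n f = phi_arrow m n g"
    unfolding phi_arrow_def by (auto simp: phi_to_gam_def intro: YM_cong)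
next
  fix m n k :: nat and f g :: "nat \<Rightarrow> nat"
  assume "f \<in> phi_hom m n" "g \<in> phi_hom n k"
  moreover from this have "g \<circ> f \<in> phi_hom m k"
    by (auto simp: phi_hom_def)
  ultimately show "phi_arrow m k (g \<circ> f) = phi_arrow n k g \<cdot> phi_arrow m n f"
    by (simp add: phi_arrow_def phi_to_gam_comp YM_comp phi_to_gam_hom)
qed (auto simp: hom_iff phi_arrow_def phi_to_gam_id YM_id phi_to_gam_hom phi_hom_def)

lemma colax_xi_natural:
  assumes f: "f \<in> phi_hom m m'" and g: "g \<in> phi_hom n n'"
  shows "colax_xi m' n' \<cdot> phi_arrow (m + n) (m' + n') (phi_plus m m' f g)
    = (phi_arrow m m' f \<otimes> phi_arrow n n' g) \<cdot> colax_xi m n"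
proof -
  let ?fg = "phi_to_gam (phi_plus m m' f g)"
  have fg: "?fg \<in> gam_hom (m + n) (m' + n')"
    by (rule phi_to_gam_hom[OF phi_plus_hom[OF f g]])
  have f': "phi_to_gam f \<in> gam_hom m m'" and g': "phi_to_gam g \<in> gam_hom n n'"
    using phi_to_gam_hom f g by auto
  have f_lt: "f i < m'" if "i < m" for i
    using f that by (auto simp: phi_hom_def)
  have pr1: "gam_pr1 m' n' (?fg i) = phi_to_gam f (gam_pr1 m n i)"
    and pr2: "gam_pr2 m' n' (?fg i) = phi_to_gam g (gam_pr2 m n i)" if "i \<le> m + n" for i
    using that f_lt[of "i - 1"] unfolding gam_pr1_def gam_pr2_def phi_to_gam_def phi_plus_def
    by (auto simp: Suc_diff_Suc)
  have "colax_xi m' n' \<cdot> phi_arrow (m + n) (m' + n') (phi_plus m m' f g)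
     = \<langle>YM (m' + n') m' (gam_pr1 m' n') \<cdot> YM (m + n) (m' + n') ?fg,
        YM (m' + n') n' (gam_pr2 m' n') \<cdot> YM (m + n) (m' + n') ?fg\<rangle>"
    unfolding colax_xi_def phi_arrow_def using phi_plus_hom[OF f g] fg gam_pr1_hom gam_pr2_hom
    by (simp add: pair_cmp)
  also have "\<dots> = \<langle>YM m m' (phi_to_gam f) \<cdot> YM (m + n) m (gam_pr1 m n),
                   YM n n' (phi_to_gam g) \<cdot> YM (m + n) n (gam_pr2 m n)\<rangle>"
    using YM_comp_cong[OF fg gam_pr1_hom gam_pr1_hom f' pr1]
      YM_comp_cong[OF fg gam_pr2_hom gam_pr2_hom g' pr2] by simp
  also have "\<dots> = (phi_arrow m m' f \<otimes> phi_arrow n n' g) \<cdot> colax_xi m n"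
    unfolding colax_xi_def phi_arrow_def using f g f' g' gam_pr1_hom gam_pr2_hom
    by (simp add: tensor_pair)
  finally show ?thesis .
qed

lemma colax_xi_coassoc:
  "(colax_xi l m \<otimes> cid (YO n)) \<cdot> colax_xi (l + m) n =
   c_assoc C (YO l) (YO m) (YO n) \<cdot> (cid (YO l) \<otimes> colax_xi m n) \<cdot> colax_xi l (m + n)"
proof -
  let ?A1 = "YM (l + (m + n)) (l + m) (gam_pr1 (l + m) n)"
  let ?B1 = "YM (l + (m + n)) n (gam_pr2 (l + m) n)"
  let ?A2 = "YM (l + (m + n)) l (gam_pr1 l (m + n))"
  let ?B2 = "YM (l + (m + n)) (m + n) (gam_pr2 l (m + n))"
  let ?a1 = "YM (l + m) l (gam_pr1 l m)" and ?a2 = "YM (l + m) m (gam_pr2 l m)"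
  let ?b1 = "YM (m + n) m (gam_pr1 m n)" and ?b2 = "YM (m + n) n (gam_pr2 m n)"
  have A1: "gam_pr1 (l + m) n \<in> gam_hom (l + (m + n)) (l + m)"
    and B1: "gam_pr2 (l + m) n \<in> gam_hom (l + (m + n)) n"
    using gam_pr1_hom[of "l + m" n] gam_pr2_hom[of "l + m" n] by (simp_all add: add.assoc)
  note A2 = gam_pr1_hom[of l "m + n"] and B2 = gam_pr2_hom[of l "m + n"]
    and a1 = gam_pr1_hom[of l m] and a2 = gam_pr2_hom[of l m]
    and b1 = gam_pr1_hom[of m n] and b2 = gam_pr2_hom[of m n]
  have xi: "colax_xi l m = \<langle>?a1, ?a2\<rangle>" "colax_xi (l + m) n = \<langle>?A1, ?B1\<rangle>"
    "colax_xi m n = \<langle>?b1, ?b2\<rangle>" "colax_xi l (m + n) = \<langle>?A2, ?B2\<rangle>"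
    unfolding colax_xi_def by (simp_all add: add.assoc)
  have "(colax_xi l m \<otimes> cid (YO n)) \<cdot> colax_xi (l + m) n = \<langle>\<langle>?a1 \<cdot> ?A1, ?a2 \<cdot> ?A1\<rangle>, ?B1\<rangle>"
    unfolding xi using A1 B1 a1 a2 by (simp add: tensor_pair pair_cmp)
  also have "\<langle>\<langle>?a1 \<cdot> ?A1, ?a2 \<cdot> ?A1\<rangle>, ?B1\<rangle> = \<langle>\<langle>?A2, ?b1 \<cdot> ?B2\<rangle>, ?b2 \<cdot> ?B2\<rangle>"
  proof -
    have "?a1 \<cdot> ?A1 = ?A2"
      by (rule YM_comp_eq[OF A1 a1 A2]) (auto simp: gam_pr1_def)
    moreover have "?a2 \<cdot> ?A1 = ?b1 \<cdot> ?B2"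
      by (rule YM_comp_cong[OF A1 a2 B2 b1]) (auto simp: gam_pr1_def gam_pr2_def)
    moreover have "?b2 \<cdot> ?B2 = ?B1"
      by (rule YM_comp_eq[OF B2 b2 B1]) (auto simp: gam_pr2_def)
    ultimately show ?thesis by simp
  qed
  also have "\<dots> = c_assoc C (YO l) (YO m) (YO n) \<cdot> \<langle>?A2, \<langle>?b1 \<cdot> ?B2, ?b2 \<cdot> ?B2\<rangle>\<rangle>"
    using A2 B2 b1 b2 B1 by (intro c_assoc_pair[symmetric]) simp_all
  also have "\<dots> = c_assoc C (YO l) (YO m) (YO n) \<cdot> (cid (YO l) \<otimes> colax_xi m n) \<cdot> colax_xi l (m + n)"
    unfolding xi using A2 B2 b1 b2 by (simp add: tensor_pair pair_cmp)
  finally show ?thesis .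
qed

lemma colax_xi_counit_left:
  "(colax_xi0 \<otimes> cid (YO n)) \<cdot> colax_xi 0 n = \<langle>bang (YO n), cid (YO n)\<rangle>"
proof -
  have pr1: "gam_pr1 0 n \<in> gam_hom n 0" and pr2: "gam_pr2 0 n \<in> gam_hom n n"
    using gam_pr1_hom[of 0 n] gam_pr2_hom[of 0 n] by simp_all
  have "YM n n (gam_pr2 0 n) = cid (YO n)"
    using YM_cong[of n "gam_pr2 0 n" id n] YM_id by (simp add: gam_pr2_def)
  moreover have "bang (YO 0) \<cdot> YM n 0 (gam_pr1 0 n) = bang (YO n)"
    using pr1 by (simp add: bang_cmp)
  ultimately show ?thesis
    unfolding colax_xi_def colax_xi0_def using pr1 pr2 by (simp add: tensor_pair)
qed

lemma colax_xi_counit_right: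
  "(cid (YO n) \<otimes> colax_xi0) \<cdot> colax_xi n 0 = \<langle>cid (YO n), bang (YO n)\<rangle>"
proof -
  have pr1: "gam_pr1 n 0 \<in> gam_hom n n" and pr2: "gam_pr2 n 0 \<in> gam_hom n 0"
    using gam_pr1_hom[of n 0] gam_pr2_hom[of n 0] by simp_all
  have "YM n n (gam_pr1 n 0) = cid (YO n)"
    using YM_cong[of n "gam_pr1 n 0" id n] YM_id by (simp add: gam_pr1_def)
  moreover have "bang (YO 0) \<cdot> YM n 0 (gam_pr2 n 0) = bang (YO n)"
    using pr2 by (simp add: bang_cmp)
  ultimately show ?thesis
    unfolding colax_xi_def colax_xi0_def using pr1 pr2 by (simp add: tensor_pair)
qed

lemma colax_xi_symmetric:
  "c_swap C (YO m) (YO n) \<cdot> colax_xi m n = colax_xi n m \<cdot> phi_arrow (m + n) (n + m) (phi_twist m n)"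
proof -
  let ?t = "phi_to_gam (phi_twist m n)"
  have t: "?t \<in> gam_hom (m + n) (n + m)"
    by (rule phi_to_gam_hom[OF phi_twist_hom])
  have pr1: "gam_pr1 n m (?t i) = gam_pr2 m n i" and pr2: "gam_pr2 n m (?t i) = gam_pr1 m n i"
    if "i \<le> m + n" for i
    using that unfolding gam_pr1_def gam_pr2_def phi_to_gam_def phi_twist_def by auto
  have "colax_xi n m \<cdot> phi_arrow (m + n) (n + m) (phi_twist m n)
     = \<langle>YM (n + m) n (gam_pr1 n m) \<cdot> YM (m + n) (n + m) ?t,
        YM (n + m) m (gam_pr2 n m) \<cdot> YM (m + n) (n + m) ?t\<rangle>"
    unfolding colax_xi_def phi_arrow_def using phi_twist_hom t gam_pr1_hom gam_pr2_hom
    by (simp add: pair_cmp)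
  also have "\<dots> = \<langle>YM (m + n) n (gam_pr2 m n), YM (m + n) m (gam_pr1 m n)\<rangle>"
    using YM_comp_eq[OF t gam_pr1_hom gam_pr2_hom pr1] YM_comp_eq[OF t gam_pr2_hom gam_pr1_hom pr2]
    by simp
  also have "\<dots> = c_swap C (YO m) (YO n) \<cdot> colax_xi m n"
    unfolding colax_xi_def using gam_pr1_hom gam_pr2_hom by (simp add: c_swap_pair)
  finally show ?thesis ..
qed

end

section \<open>Speciality and the homotopy condition\<close>

context gamma_functor
begin

lemma colax_xi_W_if_segal_map_W:
  assumes segal: "\<And>n. segal_map n \<in> W"
  shows "colax_xi0 \<in> W" and "colax_xi m n \<in> W"
proof -
  show xi0: "colax_xi0 \<in> W"
    using segal[of 0] unfolding segal_map_def colax_xi0_def by simp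
  have xi1: "colax_xi 1 n \<in> W" for n
  proof (rule W_cancel_left)
    show "cid (YO 1) \<otimes> segal_map n \<in> W"
      by (rule W_tensor[OF id_W[OF YO_ob] segal])
    show "(cid (YO 1) \<otimes> segal_map n) \<cdot> colax_xi 1 n \<in> W"
      using segal[of "Suc n"] unfolding segal_map_Suc .
  qed (use segal_map_hom in simp_all)
  show "colax_xi m n \<in> W"
  proof (induction m arbitrary: n)
    case 0
    show ?case
    proof (rule W_cancel_left)
      show "colax_xi0 \<otimes> cid (YO n) \<in> W"
        by (rule W_tensor[OF xi0 id_W[OF YO_ob]])
    qed (simp_all add: colax_xi_counit_left pair_bang_id_W)
  next
    case (Suc m)
    have "(cid (YO 1) \<otimes> colax_xi m n) \<cdot> colax_xi 1 (m + n) \<in> W"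
      by (rule W_cmp[OF xi1 W_tensor[OF id_W[OF YO_ob] Suc]]) simp
    then have
      "c_assoc C (YO 1) (YO m) (YO n) \<cdot> (cid (YO 1) \<otimes> colax_xi m n) \<cdot> colax_xi 1 (m + n) \<in> W"
      by (rule W_cmp[OF _ c_assoc_W]) simp_all
    then have composite: "(colax_xi 1 m \<otimes> cid (YO n)) \<cdot> colax_xi (1 + m) n \<in> W"
      by (simp only: colax_xi_coassoc)
    have "colax_xi (1 + m) n \<in> W"
      by (rule W_cancel_left[OF _ W_tensor[OF xi1 id_W[OF YO_ob]] _ composite]) simp_all
    then show ?case by simp
  qed
qed

end

locale special_gamma = gamma_functor +
  assumes special: "special_obj C W (YO, YM)"
begin

lemma hty_obj_colax: "hty_obj C W (YO, phi_arrow, colax_xi, colax_xi0)"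
proof -
  have "segal_map n \<in> W" for n
    using special unfolding special_obj_def segal_map_def by simp
  then show ?thesis
    unfolding hty_obj_def
    using phi_functor_phi_arrow colax_xi_natural colax_xi_coassoc colax_xi_counit_left
      colax_xi_counit_right colax_xi_symmetric colax_xi_W_if_segal_map_W
    by (simp add: hom_iff colax_xi0_def)
qed

end

sublocale hty_algebra \<subseteq> Y: gamma_functor C W XO gam_arrow
  by unfold_locales (rule gam_functor_gam_arrow)

context hty_algebra
begin

lemma colax_xi_gam_arrow: "Y.colax_xi = xi"
  by (simp add: fun_eq_iff Y.colax_xi_def gam_arrow_gam_pr1 gam_arrow_gam_pr2 xi_eq_pair)

lemma special_obj_gam_arrow: "special_obj C W (XO, gam_arrow)"
proof -
  have "Y.segal_map n \<in> W" for n
  proof (induction n)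
    case 0
    then show ?case
      using xi0_W by (simp add: Y.segal_map_def xi0_eq_bang)
  next
    case (Suc n)
    then show ?case
      unfolding Y.segal_map_Suc colax_xi_gam_arrow
      using Y.segal_map_hom by (intro W_cmp[OF xi_W] W_tensor[OF id_W]) simp_all
  qed
  then show ?thesis
    unfolding special_obj_def Y.segal_map_def using gam_functor_gam_arrow by simp
qed

lemma phi_arrow_gam_arrow: "Y.phi_arrow = XM"
  by (simp add: fun_eq_iff Y.phi_arrow_def gam_arrow_phi_to_gam XM_undefined)

end

locale hty_morphism =
  A: hty_algebra C W XO XM xi xi0 + B: hty_algebra C W XO' XM' xi' xi0'
  for C :: "('o, 'm) ccat" and W XO XM xi xi0 XO' XM' xi' xi0' +
  fixes \<sigma> :: "nat \<Rightarrow> 'm"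
  assumes hty_morphism: "hty_mor C W (XO, XM, xi, xi0) (XO', XM', xi', xi0') \<sigma>"
begin

lemma \<sigma>_hom: "\<sigma> n \<in> c_hom C (XO n) (XO' n)"
  and \<sigma>_natural: "f \<in> phi_hom m n \<Longrightarrow> XM' m n f \<cdot> \<sigma> m = \<sigma> n \<cdot> XM m n f"
  and \<sigma>_monoidal: "xi' m n \<cdot> \<sigma> (m + n) = (\<sigma> m \<otimes> \<sigma> n) \<cdot> xi m n"
  using hty_morphism unfolding hty_mor_def by auto

lemma \<sigma>_ar [simp]: "\<sigma> n \<in> A.ar"
  and \<sigma>_dm [simp]: "A.dm (\<sigma> n) = XO n"
  and \<sigma>_cd [simp]: "A.cd (\<sigma> n) = XO' n"
  using \<sigma>_hom by (auto simp: A.hom_iff)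

lemma \<sigma>_xi_fst: "B.xi_fst m n \<cdot> \<sigma> (m + n) = \<sigma> m \<cdot> A.xi_fst m n"
proof -
  have "B.xi_fst m n \<cdot> \<sigma> (m + n) = A.pr1 (XO' m) (XO' n) \<cdot> xi' m n \<cdot> \<sigma> (m + n)"
    unfolding B.xi_fst_def by (simp add: A.cmp_assoc)
  also have "\<dots> = A.pr1 (XO' m) (XO' n) \<cdot> (\<sigma> m \<otimes> \<sigma> n) \<cdot> xi m n"
    by (simp add: \<sigma>_monoidal)
  also have "\<dots> = \<sigma> m \<cdot> A.xi_fst m n"
    unfolding A.xi_fst_def by (simp add: A.cmp_assoc[symmetric])
  finally show ?thesis .
qed

lemma \<sigma>_gam_arrow:
  assumes g: "g \<in> gam_hom m n"
  shows "B.gam_arrow m n g \<cdot> \<sigma> m = \<sigma> n \<cdot> A.gam_arrow m n g"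
proof -
  obtain k p h where v: "gam_factor m n g k p h"
    using gam_factor_exists[OF g] .
  have "k \<le> m" and p: "p \<in> phi_hom m m" and h: "h \<in> phi_hom k n"
    using v unfolding gam_factor_def by (auto intro: bij_betw_imp_phi_hom)
  have \<sigma>_xi_fst': "B.xi_fst k (m - k) \<cdot> \<sigma> m = \<sigma> k \<cdot> A.xi_fst k (m - k)"
    using \<sigma>_xi_fst[of k "m - k"] \<open>k \<le> m\<close> by simp
  have "B.gam_arrow m n g \<cdot> \<sigma> m = XM' k n h \<cdot> B.xi_fst k (m - k) \<cdot> XM' m m p \<cdot> \<sigma> m"
    unfolding B.gam_arrow_eq[OF g v] B.factor_arrow_def using \<open>k \<le> m\<close> p h by (simp add: A.cmp_assoc)
  also have "\<dots> = XM' k n h \<cdot> B.xi_fst k (m - k) \<cdot> \<sigma> m \<cdot> XM m m p"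
    using \<sigma>_natural[OF p] by simp
  also have "\<dots> = XM' k n h \<cdot> \<sigma> k \<cdot> A.xi_fst k (m - k) \<cdot> XM m m p"
    using A.precompose_eq[OF \<sigma>_xi_fst'] \<open>k \<le> m\<close> p by simp
  also have "\<dots> = \<sigma> n \<cdot> XM k n h \<cdot> A.xi_fst k (m - k) \<cdot> XM m m p"
    using A.precompose_eq[OF \<sigma>_natural[OF h]] \<open>k \<le> m\<close> p h by simp
  also have "\<dots> = \<sigma> n \<cdot> A.gam_arrow m n g"
    unfolding A.gam_arrow_eq[OF g v] A.factor_arrow_def ..
  finally show ?thesis .
qed

lemma special_mor_gam_arrow: "special_mor C W (XO, A.gam_arrow) (XO', B.gam_arrow) \<sigma>"
  unfolding special_mor_def using A.special_obj_gam_arrow B.special_obj_gam_arrow \<sigma>_hom \<sigma>_gam_arrow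
  by simp

end

locale special_morphism = A: special_gamma C W YO YM + B: special_gamma C W YO' YM'
  for C :: "('o, 'm) ccat" and W YO YM YO' YM' +
  fixes \<tau> :: "nat \<Rightarrow> 'm"
  assumes special_morphism: "special_mor C W (YO, YM) (YO', YM') \<tau>"
begin

lemma \<tau>_hom: "\<tau> n \<in> c_hom C (YO n) (YO' n)"
  and \<tau>_natural: "f \<in> gam_hom m n \<Longrightarrow> YM' m n f \<cdot> \<tau> m = \<tau> n \<cdot> YM m n f"
  using special_morphism unfolding special_mor_def by auto

lemma \<tau>_ar [simp]: "\<tau> n \<in> A.ar"
  and \<tau>_dm [simp]: "A.dm (\<tau> n) = YO n"
  and \<tau>_cd [simp]: "A.cd (\<tau> n) = YO' n"
  using \<tau>_hom by (auto simp: A.hom_iff)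

lemma hty_mor_colax:
  "hty_mor C W (YO, A.phi_arrow, A.colax_xi, A.colax_xi0)
     (YO', B.phi_arrow, B.colax_xi, B.colax_xi0) \<tau>"
  unfolding hty_mor_def
proof (simp only: prod.case, intro conjI allI impI)
  show "hty_obj C W (YO, A.phi_arrow, A.colax_xi, A.colax_xi0)"
    by (rule A.hty_obj_colax)
  show "hty_obj C W (YO', B.phi_arrow, B.colax_xi, B.colax_xi0)"
    by (rule B.hty_obj_colax)
  show "\<tau> n \<in> c_hom C (YO n) (YO' n)" for n
    by (rule \<tau>_hom)
  show "B.phi_arrow m n f \<cdot> \<tau> m = \<tau> n \<cdot> A.phi_arrow m n f" if "f \<in> phi_hom m n" for m n f
    unfolding A.phi_arrow_def B.phi_arrow_def using that by (simp add: \<tau>_natural phi_to_gam_hom)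
  show "B.colax_xi m n \<cdot> \<tau> (m + n) = (\<tau> m \<otimes> \<tau> n) \<cdot> A.colax_xi m n" for m n
    unfolding A.colax_xi_def B.colax_xi_def using gam_pr1_hom gam_pr2_hom
    by (simp add: A.pair_cmp A.tensor_pair \<tau>_natural)
  show "B.colax_xi0 \<cdot> \<tau> 0 = A.colax_xi0"
    unfolding A.colax_xi0_def B.colax_xi0_def
    by (simp add: A.bang_cmp)
qed

end

section \<open>The two constructions are mutually inverse\<close>

context special_gamma
begin

lemma gam_arrow_colax: "hty_algebra.gam_arrow C YO phi_arrow colax_xi = YM"
proof -
  interpret H: hty_algebra C W YO phi_arrow colax_xi colax_xi0
    by unfold_locales (rule hty_obj_colax)
  have "H.gam_arrow m n g = YM m n g" if g: "g \<in> gam_hom m n" for m n g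
  proof -
    obtain k p h where v: "gam_factor m n g k p h"
      using gam_factor_exists[OF g] .
    have "k \<le> m" and p: "p \<in> phi_hom m m" and h: "h \<in> phi_hom k n"
      using v unfolding gam_factor_def by (auto intro: bij_betw_imp_phi_hom)
    have pr1: "gam_pr1 k (m - k) \<in> gam_hom m k"
      using gam_pr1_hom[of k "m - k"] \<open>k \<le> m\<close> by simp
    have "H.xi_fst k (m - k) = YM m k (gam_pr1 k (m - k))"
      unfolding H.xi_fst_def colax_xi_def using pr1 gam_pr2_hom[of k "m - k"] \<open>k \<le> m\<close> by simp
    then have "H.gam_arrow m n g
        = YM k n (phi_to_gam h) \<cdot> YM m k (gam_pr1 k (m - k)) \<cdot> YM m m (phi_to_gam p)"
      unfolding H.gam_arrow_eq[OF g v] H.factor_arrow_def phi_arrow_def using p h by simp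
    also have "\<dots> = YM m n (phi_to_gam h \<circ> gam_pr1 k (m - k) \<circ> phi_to_gam p)"
      using YM_comp[OF phi_to_gam_hom[OF p] pr1]
        YM_comp[OF gam_comp_hom[OF phi_to_gam_hom[OF p] pr1] phi_to_gam_hom[OF h]]
      by (simp add: comp_assoc)
    also have "\<dots> = YM m n g"
      by (rule YM_cong) (rule gam_factor_factors[OF v g])
    finally show ?thesis .
  qed
  then show ?thesis
    by (intro ext) (metis H.gam_arrow_undefined YM_undefined)
qed

end

definition hty_to_special :: "('o, 'm) ccat \<Rightarrow> ('o, 'm) hty_obj \<Rightarrow> ('o, 'm) gam_obj" where
  "hty_to_special C X = (case X of (XO, XM, xi, xi0) \<Rightarrow> (XO, hty_algebra.gam_arrow C XO XM xi))"

definition special_to_hty :: "('o, 'm) ccat \<Rightarrow> ('o, 'm) gam_obj \<Rightarrow> ('o, 'm) hty_obj" where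
  "special_to_hty C Y = (case Y of (YO, YM) \<Rightarrow>
     (YO, gamma_functor.phi_arrow YM, gamma_functor.colax_xi C YM, gamma_functor.colax_xi0 C YO))"

lemma fst_hty_to_special: "fst (hty_to_special C X) = fst X"
  by (cases X) (simp add: hty_to_special_def)

lemma fst_special_to_hty: "fst (special_to_hty C Y) = fst Y"
  by (cases Y) (simp add: special_to_hty_def)

context
  fixes C :: "('o, 'm) ccat" and W
  assumes C: "cartesian_cat_with_equivalences C W"
begin

lemma hty_algebraI: "hty_obj C W (XO, XM, xi, xi0) \<Longrightarrow> hty_algebra C W XO XM xi xi0"
  using C by (intro hty_algebra.intro cartesian_weq.intro hty_algebra_axioms.intro)

lemma special_gammaI: "special_obj C W (YO, YM) \<Longrightarrow> special_gamma C W YO YM"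
  using C by (intro special_gamma.intro gamma_functor.intro cartesian_weq.intro
      gamma_functor_axioms.intro special_gamma_axioms.intro) (auto simp: special_obj_def)

lemma special_obj_hty_to_special: "hty_obj C W X \<Longrightarrow> special_obj C W (hty_to_special C X)"
  by (cases X) (auto simp: hty_to_special_def dest: hty_algebraI hty_algebra.special_obj_gam_arrow)

lemma hty_obj_special_to_hty: "special_obj C W Y \<Longrightarrow> hty_obj C W (special_to_hty C Y)"
  by (cases Y) (auto simp: special_to_hty_def dest: special_gammaI special_gamma.hty_obj_colax)

lemma special_mor_hty_to_special:
  assumes "hty_mor C W X X' \<sigma>"
  shows "special_mor C W (hty_to_special C X) (hty_to_special C X') \<sigma>"
proof -
  obtain XO XM xi xi0 XO' XM' xi' xi0'
    where X: "X = (XO, XM, xi, xi0)" and X': "X' = (XO', XM', xi', xi0')"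
    by (cases X, cases X') auto
  interpret hty_morphism C W XO XM xi xi0 XO' XM' xi' xi0' \<sigma>
    using assms hty_algebraI unfolding X X' hty_mor_def
    by (intro hty_morphism.intro hty_morphism_axioms.intro) (auto simp: hty_mor_def)
  show ?thesis
    using special_mor_gam_arrow by (simp add: X X' hty_to_special_def)
qed

lemma hty_mor_special_to_hty:
  assumes "special_mor C W Y Y' \<tau>"
  shows "hty_mor C W (special_to_hty C Y) (special_to_hty C Y') \<tau>"
proof -
  obtain YO YM YO' YM' where Y: "Y = (YO, YM)" and Y': "Y' = (YO', YM')"
    by (cases Y, cases Y') auto
  interpret special_morphism C W YO YM YO' YM' \<tau>
    using assms special_gammaI unfolding Y Y' special_mor_def
    by (intro special_morphism.intro special_morphism_axioms.intro) (auto simp: special_mor_def)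
  show ?thesis
    using hty_mor_colax by (simp add: Y Y' special_to_hty_def)
qed

lemma special_to_hty_hty_to_special:
  assumes "hty_obj C W X"
  shows "special_to_hty C (hty_to_special C X) = X"
proof (cases X)
  case (fields XO XM xi xi0)
  interpret hty_algebra C W XO XM xi xi0
    using assms fields by (simp add: hty_algebraI)
  show ?thesis
    using fields by (simp add: hty_to_special_def special_to_hty_def phi_arrow_gam_arrow
        colax_xi_gam_arrow Y.colax_xi0_def xi0_eq_bang)
qed

lemma hty_to_special_special_to_hty: "special_obj C W Y \<Longrightarrow> hty_to_special C (special_to_hty C Y) = Y"
  by (cases Y) (auto simp: hty_to_special_def special_to_hty_def special_gamma.gam_arrow_colax
      dest: special_gammaI)

end

theorem corollary3p1p3:
  fixes C :: "('o, 'm) ccat" and W :: "'m set"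
  assumes "cartesian_cat_with_equivalences C W"
  shows "hty_iso_special C W"
  unfolding hty_iso_special_def
  using assms
  by (intro exI[of _ "hty_to_special C"] exI[of _ "special_to_hty C"] exI[of _ "\<lambda>_ _ \<sigma>. \<sigma>"])
    (simp add: hty_id_def special_id_def fst_hty_to_special fst_special_to_hty
      special_obj_hty_to_special hty_obj_special_to_hty special_mor_hty_to_special
      hty_mor_special_to_hty special_to_hty_hty_to_special hty_to_special_special_to_hty)

end
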